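(* Let $\mathcal{S}$ be finite, $\Pi$ irreducible stochastic on $\mathcal{S}$, $\kappa(x,y):=\pi_{xy}-\mathbf{1}_{x=y}$, $Q=(q(y))$ the invariant distribution, $\widehat\kappa(x,y):=q(y)\kappa(y,x)/q(x)$. Let $X(t)=Z_{N(t)}$ be the continuous-time chain built from a Markov chain $(Z_n)$ with transition matrix $\Pi$ and initial law with positive entries, and an independent rate-one Poisson process $N$; $\mathbb{P}$ is the underlying measure, $\ell(t,y):=\mathbb{P}(X(t)=y)/q(y)$, and $\mathbb{Q}$ is a measure under which $X$ has the same dynamics but initial law $Q$. Fix $T\in(0,\infty)$, $\widehat X(s):=X(T-s)$, $\widehat{\mathcal{G}}(s):=\sigma(\widehat X(u),0\le u\le s)$. Let $\Psi(r):=r\log r-r+1$ for $r>0$ and $$\Lambda^{\mathbb{P}}(t,x):=\sum_{y\neq x}\widehat\kappa(x,y)\,\Psi\!\Big(\frac{\ell(t,y)}{\ell(t,x)}\Big)\ge0,\qquad \Lambda^{\mathbb{Q}}(t,x):=\ell(t,x)\Lambda^{\mathbb{P}}(t,x)\ge0 .$$ Then $$\ell(T-s,\widehat X(s))\log\ell(T-s,\widehat X(s))-\int_0^s\Lambda^{\mathbb{Q}}(T-u,\widehat X(u))\,\mathrm{d}u,\qquad0\le s\le T,$$ is a $(\widehat{\mathcal{G}},\mathbb{Q})$-martingale, and $$\log\ell(T-s,\widehat X(s))-\int_0^s\Lambda^{\mathbb{P}}(T-u,\widehat X(u))\,\mathrm{d}u,\qquad0\le s\le T,$$ is a $(\widehat{\mathcal{G}},\mathbb{P})$-martingale.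 *)

theory Defs
  imports "HOL-Probability.Probability"
begin

fun mat_pow :: "('s::finite \<Rightarrow> 's \<Rightarrow> real) \<Rightarrow> nat \<Rightarrow> 's \<Rightarrow> 's \<Rightarrow> real" where
  "mat_pow P 0 x y = (if x = y then 1 else 0)"
| "mat_pow P (Suc n) x y = (\<Sum>z\<in>UNIV. mat_pow P n x z * P z y)"

definition stochastic :: "('s::finite \<Rightarrow> 's \<Rightarrow> real) \<Rightarrow> bool" where
  "stochastic P \<longleftrightarrow> (\<forall>x y. 0 \<le> P x y) \<and> (\<forall>x. (\<Sum>y\<in>UNIV. P x y) = 1)"

definition irreducible_chain :: "('s::finite \<Rightarrow> 's \<Rightarrow> real) \<Rightarrow> bool" where
  "irreducible_chain P \<longleftrightarrow> (\<forall>x y. \<exists>n. mat_pow P n x y > 0)"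

definition invariant_distribution :: "('s::finite \<Rightarrow> 's \<Rightarrow> real) \<Rightarrow> ('s \<Rightarrow> real) \<Rightarrow> bool" where
  "invariant_distribution P q \<longleftrightarrow> (\<forall>x. 0 \<le> q x) \<and> (\<Sum>x\<in>UNIV. q x) = 1
     \<and> (\<forall>y. (\<Sum>x\<in>UNIV. q x * P x y) = q y)"

definition kappa :: "('s \<Rightarrow> 's \<Rightarrow> real) \<Rightarrow> 's \<Rightarrow> 's \<Rightarrow> real" where
  "kappa P x y = P x y - (if x = y then 1 else 0)"

definition kappa_hat :: "('s \<Rightarrow> 's \<Rightarrow> real) \<Rightarrow> ('s \<Rightarrow> real) \<Rightarrow> 's \<Rightarrow> 's \<Rightarrow> real" where
  "kappa_hat P q x y = q y * kappa P y x / q x"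

definition markov_chain :: "'w measure \<Rightarrow> (nat \<Rightarrow> 'w \<Rightarrow> 's::finite) \<Rightarrow> ('s \<Rightarrow> 's \<Rightarrow> real)
    \<Rightarrow> ('s \<Rightarrow> real) \<Rightarrow> bool" where
  "markov_chain M Z P mu \<longleftrightarrow>
     (\<forall>n. Z n \<in> measurable M (count_space UNIV)) \<and>
     (\<forall>n (xs :: nat \<Rightarrow> 's). measure M {\<omega>\<in>space M. \<forall>i\<le>n. Z i \<omega> = xs i}
        = mu (xs 0) * (\<Prod>i<n. P (xs i) (xs (Suc i))))"

definition poisson_process1 :: "'w measure \<Rightarrow> (real \<Rightarrow> 'w \<Rightarrow> nat) \<Rightarrow> bool" where
  "poisson_process1 M N \<longleftrightarrow>
     (\<forall>t. N t \<in> measurable M (count_space UNIV)) \<and>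
     (\<forall>\<omega>\<in>space M. N 0 \<omega> = 0 \<and> mono_on {0..} (\<lambda>t. N t \<omega>) \<and>
        (\<forall>t\<ge>0. continuous (at_right t) (\<lambda>s. real (N s \<omega>)))) \<and>
     (\<forall>s t k. 0 \<le> s \<and> s \<le> t \<longrightarrow>
        measure M {\<omega>\<in>space M. N t \<omega> - N s \<omega> = k} = (t - s) ^ k / fact k * exp (-(t - s))) \<and>
     (\<forall>(ts :: nat \<Rightarrow> real) n. 0 \<le> ts 0 \<and> mono ts \<longrightarrow>
        prob_space.indep_vars M (\<lambda>_. count_space UNIV) (\<lambda>i \<omega>. N (ts (Suc i)) \<omega> - N (ts i) \<omega>) {..<n})"

definition independent_processes :: "'w measure \<Rightarrow> (nat \<Rightarrow> 'w \<Rightarrow> 's) \<Rightarrow> (real \<Rightarrow> 'w \<Rightarrow> nat) \<Rightarrow> bool" where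
  "independent_processes M Z N \<longleftrightarrow> prob_space.indep_set M
     (sets (sigma (space M) {{\<omega>\<in>space M. Z n \<omega> = x} | n x. True}))
     (sets (sigma (space M) {{\<omega>\<in>space M. N t \<omega> = k} | t k. True}))"

definition ctchain :: "(nat \<Rightarrow> 'w \<Rightarrow> 's) \<Rightarrow> (real \<Rightarrow> 'w \<Rightarrow> nat) \<Rightarrow> real \<Rightarrow> 'w \<Rightarrow> 's" where
  "ctchain Z N t \<omega> = Z (N t \<omega>) \<omega>"

definition ell :: "'w measure \<Rightarrow> (real \<Rightarrow> 'w \<Rightarrow> 's) \<Rightarrow> ('s \<Rightarrow> real) \<Rightarrow> real \<Rightarrow> 's \<Rightarrow> real" where
  "ell M X q t y = measure M {\<omega>\<in>space M. X t \<omega> = y} / q y"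

definition Psi :: "real \<Rightarrow> real" where
  "Psi r = r * ln r - r + 1"

definition LambdaP :: "('s::finite \<Rightarrow> 's \<Rightarrow> real) \<Rightarrow> ('s \<Rightarrow> real) \<Rightarrow> (real \<Rightarrow> 's \<Rightarrow> real) \<Rightarrow> real \<Rightarrow> 's \<Rightarrow> real" where
  "LambdaP P q l t x = (\<Sum>y\<in>UNIV - {x}. kappa_hat P q x y * Psi (l t y / l t x))"

definition LambdaQ :: "('s::finite \<Rightarrow> 's \<Rightarrow> real) \<Rightarrow> ('s \<Rightarrow> real) \<Rightarrow> (real \<Rightarrow> 's \<Rightarrow> real) \<Rightarrow> real \<Rightarrow> 's \<Rightarrow> real" where
  "LambdaQ P q l t x = l t x * LambdaP P q l t x"

definition nat_filtration :: "'w measure \<Rightarrow> (real \<Rightarrow> 'w \<Rightarrow> 's) \<Rightarrow> real \<Rightarrow> 'w measure" where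
  "nat_filtration M Y s = sigma (space M) {{\<omega>\<in>space M. Y u \<omega> = y} | u y. 0 \<le> u \<and> u \<le> s}"

definition martingale_on :: "'w measure \<Rightarrow> (real \<Rightarrow> 'w measure) \<Rightarrow> real set \<Rightarrow> (real \<Rightarrow> 'w \<Rightarrow> real) \<Rightarrow> bool" where
  "martingale_on M F I Y \<longleftrightarrow>
     (\<forall>s\<in>I. subalgebra M (F s)) \<and>
     (\<forall>s\<in>I. \<forall>t\<in>I. s \<le> t \<longrightarrow> sets (F s) \<subseteq> sets (F t)) \<and>
     (\<forall>s\<in>I. Y s \<in> borel_measurable (F s) \<and> integrable M (Y s)) \<and>
     (\<forall>s\<in>I. \<forall>t\<in>I. s \<le> t \<longrightarrow> (AE \<omega> in M. real_cond_exp M (F s) (Y t) \<omega> = Y s \<omega>))"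

end

theory Submission
  imports Defs
begin

text \<open>
  Conditioning on the Poisson clock and using the independence of \<open>Z\<close> and \<open>N\<close>, the
  finite-dimensional laws of \<open>X\<close> are those of a Markov process with transition function
  \<open>p(t) = exp(-t) exp(t \<Pi>) = exp(t \<kappa>)\<close>; so under an initial law \<open>\<nu>\<^sub>0\<close> the law of
  \<open>X(v)\<close> is \<open>\<nu>\<^sub>0 p(v)\<close>, and \<open>\<ell>(v) = \<mu> p(v) / q\<close> solves the forward equation.
  If \<open>A\<close> fixes finitely many values of \<open>X\<close> at times \<open>\<ge> b = T - s\<close>, the Markov property
  gives, for \<open>v \<le> b\<close>, \<open>E[1\<^sub>A F(X(v))] = \<Sum>\<^sub>x c(x) \<Sum>\<^sub>z law(X(v))(z) F(z) p(b - v)(z,x)\<close>.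
  In both cases of the theorem the marginal law times the function of \<open>X\<close> is \<open>q \<ell> ln \<ell>\<close>
  and times the drift is \<open>q \<Lambda>\<^sup>\<bbbQ>\<close>; moreover \<open>v \<mapsto> \<Sum>\<^sub>z q(z) \<ell> ln \<ell> (v,z) p(b - v)(z,x)\<close> has derivative
  \<open>-\<Sum>\<^sub>w q(w) \<Lambda>\<^sup>\<bbbQ>(v,w) p(b - v)(w,x)\<close> by an algebraic identity relating \<open>\<kappa>\<close>, its
  \<open>q\<close>-reversal and \<open>\<Psi>\<close>. Fubini and the fundamental theorem of calculus give
  \<open>E[1\<^sub>A (Y(t) - Y(s))] = 0\<close>, and a Dynkin argument extends this from these cylinder events
  to the whole \<open>\<sigma>\<close>-algebra of the reversed past.
\<close>

section \<open>Matrix powers and the transition function\<close>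

lemma mat_pow_Suc_left: "mat_pow P (Suc n) x y = (\<Sum>z\<in>UNIV. P x z * mat_pow P n z y)"
proof (induction n arbitrary: x y)
  case 0
  have "(\<Sum>z\<in>UNIV. (if x = z then 1 else 0) * P z y) = (\<Sum>z\<in>UNIV. if x = z then P z y else 0)"
    by (rule sum.cong) auto
  moreover have "(\<Sum>z\<in>UNIV. P x z * (if z = y then 1 else 0)) = (\<Sum>z\<in>UNIV. if y = z then P x z else 0)"
    by (rule sum.cong) auto
  ultimately show ?case by simp
next
  case (Suc n)
  have "mat_pow P (Suc (Suc n)) x y = (\<Sum>z\<in>UNIV. (\<Sum>w\<in>UNIV. P x w * mat_pow P n w z) * P z y)"
    using Suc by simp
  also have "\<dots> = (\<Sum>w\<in>UNIV. P x w * (\<Sum>z\<in>UNIV. mat_pow P n w z * P z y))"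
    unfolding sum_distrib_left sum_distrib_right mult.assoc by (rule sum.swap)
  finally show ?case by simp
qed

lemma mat_pow_invariant:
  assumes "invariant_distribution P q"
  shows "(\<Sum>x\<in>UNIV. q x * mat_pow P n x y) = q y"
proof (induction n arbitrary: y)
  case 0
  have "(\<Sum>x\<in>UNIV. q x * (if x = y then 1 else 0)) = (\<Sum>x\<in>UNIV. if x = y then q x else 0)"
    by (rule sum.cong) auto
  then show ?case by simp
next
  case (Suc n)
  have "(\<Sum>x\<in>UNIV. q x * mat_pow P (Suc n) x y) = (\<Sum>z\<in>UNIV. (\<Sum>x\<in>UNIV. q x * mat_pow P n x z) * P z y)"
    by (simp add: sum_distrib_left sum_distrib_right mult.assoc) (rule sum.swap)
  also have "\<dots> = q y"
    using Suc assms unfolding invariant_distribution_def by simp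
  finally show ?case .
qed

lemma sum_mult_kappa:
  fixes P :: "'s::finite \<Rightarrow> 's \<Rightarrow> real"
  shows "(\<Sum>y\<in>UNIV. f y * kappa P y w) = (\<Sum>y\<in>UNIV. f y * P y w) - f w"
proof -
  have "(\<Sum>y\<in>UNIV. f y * (if y = w then 1 else 0)) = (\<Sum>y\<in>UNIV. if y = w then f y else 0)"
    by (rule sum.cong) auto
  then have "(\<Sum>y\<in>UNIV. f y * (if y = w then 1 else 0)) = f w" by simp
  then show ?thesis unfolding kappa_def right_diff_distrib sum_subtractf by simp
qed

lemma sum_kappa_mult:
  fixes P :: "'s::finite \<Rightarrow> 's \<Rightarrow> real"
  shows "(\<Sum>w\<in>UNIV. kappa P z w * f w) = (\<Sum>w\<in>UNIV. P z w * f w) - f z"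
proof -
  have "(\<Sum>w\<in>UNIV. (if z = w then 1 else 0) * f w) = (\<Sum>w\<in>UNIV. if z = w then f w else 0)"
    by (rule sum.cong) auto
  then have "(\<Sum>w\<in>UNIV. (if z = w then 1 else 0) * f w) = f z" by simp
  then show ?thesis unfolding kappa_def left_diff_distrib sum_subtractf by simp
qed

lemma invariant_sum_kappa:
  fixes P :: "'s::finite \<Rightarrow> 's \<Rightarrow> real"
  shows "invariant_distribution P q \<Longrightarrow> (\<Sum>y\<in>UNIV. q y * kappa P y w) = 0"
  unfolding sum_mult_kappa invariant_distribution_def by simp

definition poisson_pmf :: "real \<Rightarrow> nat \<Rightarrow> real" where
  "poisson_pmf t k = t ^ k / fact k * exp (- t)"

lemma poisson_pmf_nonneg: "0 \<le> t \<Longrightarrow> 0 \<le> poisson_pmf t k"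
  unfolding poisson_pmf_def by simp

lemma sums_poisson_pmf: "(\<lambda>k. poisson_pmf t k) sums 1"
proof -
  have "(\<lambda>n. t ^ n / fact n) sums exp t"
    using exp_converges[of t] by (simp add: divide_inverse_commute)
  then have "(\<lambda>n. t ^ n / fact n * exp (- t)) sums (exp t * exp (- t))"
    by (rule sums_mult2)
  then show ?thesis unfolding poisson_pmf_def by (simp add: exp_minus)
qed

definition mat_exp :: "('s::finite \<Rightarrow> 's \<Rightarrow> real) \<Rightarrow> real \<Rightarrow> 's \<Rightarrow> 's \<Rightarrow> real" where
  "mat_exp P t x y = (\<Sum>n. mat_pow P n x y / fact n * t ^ n)"

definition trans_fun :: "('s::finite \<Rightarrow> 's \<Rightarrow> real) \<Rightarrow> real \<Rightarrow> 's \<Rightarrow> 's \<Rightarrow> real" where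
  "trans_fun P t x y = (\<Sum>d. poisson_pmf t d * mat_pow P d x y)"

locale stochastic_matrix =
  fixes P :: "'s::finite \<Rightarrow> 's \<Rightarrow> real"
  assumes stochastic: "stochastic P"
begin

lemma stochastic_mat_pow: "stochastic (mat_pow P n)"
  unfolding stochastic_def
proof (induction n)
  case 0
  then show ?case by simp
next
  case (Suc n)
  have "0 \<le> mat_pow P (Suc n) x y" for x y
    using Suc stochastic unfolding stochastic_def by (simp add: sum_nonneg)
  moreover have "(\<Sum>y\<in>UNIV. mat_pow P (Suc n) x y) = 1" for x
  proof -
    have "(\<Sum>y\<in>UNIV. mat_pow P (Suc n) x y) = (\<Sum>z\<in>UNIV. mat_pow P n x z * (\<Sum>y\<in>UNIV. P z y))"
      by (simp add: sum_distrib_left) (rule sum.swap)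
    also have "\<dots> = 1" using Suc stochastic unfolding stochastic_def by simp
    finally show ?thesis .
  qed
  ultimately show ?case by blast
qed

lemma mat_pow_nonneg: "0 \<le> mat_pow P n x y"
  using stochastic_mat_pow unfolding stochastic_def by blast

lemma mat_pow_le_1: "mat_pow P n x y \<le> 1"
proof -
  have "mat_pow P n x y \<le> (\<Sum>y\<in>UNIV. mat_pow P n x y)"
    by (rule member_le_sum) (auto simp: mat_pow_nonneg)
  then show ?thesis using stochastic_mat_pow unfolding stochastic_def by simp
qed

lemma invariant_distribution_pos:
  assumes "irreducible_chain P" and inv: "invariant_distribution P q"
  shows "0 < q y"
proof -
  have q_nonneg: "\<forall>x. 0 \<le> q x" and q_sum: "(\<Sum>x\<in>UNIV. q x) = 1"
    using inv unfolding invariant_distribution_def by auto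
  have "\<exists>x. q x \<noteq> 0"
  proof (rule ccontr)
    assume "\<not> (\<exists>x. q x \<noteq> 0)"
    then show False using q_sum by simp
  qed
  then obtain x where x: "0 < q x" using q_nonneg by (auto simp: less_le)
  obtain n where n: "mat_pow P n x y > 0"
    using assms(1) unfolding irreducible_chain_def by blast
  have "q x * mat_pow P n x y \<le> (\<Sum>x\<in>UNIV. q x * mat_pow P n x y)"
    by (rule member_le_sum) (auto intro!: mult_nonneg_nonneg mat_pow_nonneg simp: q_nonneg)
  then have "q x * mat_pow P n x y \<le> q y"
    using mat_pow_invariant[OF inv] by simp
  moreover have "0 < q x * mat_pow P n x y" using x n by simp
  ultimately show ?thesis by simp
qed

lemma summable_mat_exp: "summable (\<lambda>n. mat_pow P n x y / fact n * t ^ n)"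
proof (rule summable_comparison_test)
  show "summable (\<lambda>n. \<bar>t\<bar> ^ n / fact n)"
    using exp_converges[of "\<bar>t\<bar>"] by (simp add: sums_summable divide_inverse_commute)
  have "\<bar>mat_pow P n x y\<bar> * \<bar>t\<bar> ^ n \<le> 1 * \<bar>t\<bar> ^ n" for n
    using mat_pow_nonneg mat_pow_le_1 by (intro mult_right_mono) auto
  then show "\<exists>N. \<forall>n\<ge>N. norm (mat_pow P n x y / fact n * t ^ n) \<le> \<bar>t\<bar> ^ n / fact n"
    by (auto simp: abs_mult power_abs divide_right_mono)
qed

lemma summable_trans_fun: "0 \<le> t \<Longrightarrow> summable (\<lambda>d. poisson_pmf t d * mat_pow P d x y)"
proof (rule summable_comparison_test[where g="poisson_pmf t"])
  assume t: "0 \<le> t"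
  show "\<exists>N. \<forall>n\<ge>N. norm (poisson_pmf t n * mat_pow P n x y) \<le> poisson_pmf t n"
    using t by (auto intro!: exI[of _ 0] mult_left_le
        simp: abs_mult poisson_pmf_nonneg mat_pow_nonneg mat_pow_le_1)
  show "summable (poisson_pmf t)" using sums_poisson_pmf by (rule sums_summable)
qed

lemma trans_fun_eq_mat_exp: "trans_fun P t x y = exp (- t) * mat_exp P t x y"
proof -
  have "trans_fun P t x y = (\<Sum>n. exp (- t) * (mat_pow P n x y / fact n * t ^ n))"
    unfolding trans_fun_def poisson_pmf_def by (simp add: field_simps)
  also have "\<dots> = exp (- t) * mat_exp P t x y"
    unfolding mat_exp_def by (rule suminf_mult[OF summable_mat_exp])
  finally show ?thesis .
qed

lemma has_real_derivative_mat_exp: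
  "((\<lambda>t. mat_exp P t x y) has_real_derivative (\<Sum>n. mat_pow P (Suc n) x y / fact n * t ^ n)) (at t)"
proof -
  define c where "c n = mat_pow P n x y / fact n" for n
  have "((\<lambda>t. \<Sum>n. c n * t ^ n) has_real_derivative (\<Sum>n. diffs c n * t ^ n)) (at t)"
    by (rule termdiffs_strong_converges_everywhere) (use summable_mat_exp in \<open>simp add: c_def\<close>)
  moreover have "diffs c n = mat_pow P (Suc n) x y / fact n" for n
    unfolding diffs_def c_def fact_Suc by (simp add: field_simps del: mat_pow.simps of_nat_Suc)
  ultimately show ?thesis unfolding mat_exp_def c_def by simp
qed

lemma mat_exp_forward_deriv:
  "((\<lambda>t. mat_exp P t x y) has_real_derivative (\<Sum>z\<in>UNIV. mat_exp P t x z * P z y)) (at t)"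
proof -
  have "(\<Sum>n. mat_pow P (Suc n) x y / fact n * t ^ n)
      = (\<Sum>n. \<Sum>z\<in>UNIV. mat_pow P n x z / fact n * t ^ n * P z y)"
    by (simp add: sum_divide_distrib sum_distrib_left sum_distrib_right mult_ac)
  also have "\<dots> = (\<Sum>z\<in>UNIV. \<Sum>n. mat_pow P n x z / fact n * t ^ n * P z y)"
    by (rule suminf_sum) (intro summable_mult2 summable_mat_exp)
  also have "\<dots> = (\<Sum>z\<in>UNIV. mat_exp P t x z * P z y)"
    unfolding mat_exp_def by (intro sum.cong refl suminf_mult2[symmetric] summable_mat_exp)
  finally show ?thesis using has_real_derivative_mat_exp[of x y t] by (simp only:)
qed

lemma mat_exp_backward_deriv:
  "((\<lambda>t. mat_exp P t x y) has_real_derivative (\<Sum>z\<in>UNIV. P x z * mat_exp P t z y)) (at t)"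
proof -
  have "(\<Sum>n. mat_pow P (Suc n) x y / fact n * t ^ n)
      = (\<Sum>n. \<Sum>z\<in>UNIV. P x z * (mat_pow P n z y / fact n * t ^ n))"
    unfolding mat_pow_Suc_left
      by (simp add: sum_divide_distrib sum_distrib_left sum_distrib_right mult_ac)
  also have "\<dots> = (\<Sum>z\<in>UNIV. \<Sum>n. P x z * (mat_pow P n z y / fact n * t ^ n))"
    by (rule suminf_sum) (intro summable_mult summable_mat_exp)
  also have "\<dots> = (\<Sum>z\<in>UNIV. P x z * mat_exp P t z y)"
    unfolding mat_exp_def by (intro sum.cong refl suminf_mult summable_mat_exp)
  finally show ?thesis using has_real_derivative_mat_exp[of x y t] by (simp only:)
qed

lemma trans_fun_forward_deriv:
  "((\<lambda>t. trans_fun P t x y) has_real_derivative (\<Sum>z\<in>UNIV. trans_fun P t x z * kappa P z y)) (at t)"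
proof -
  have "((\<lambda>t. exp (- t) * mat_exp P t x y) has_real_derivative
      exp (- t) * (- 1) * mat_exp P t x y + exp (- t) * (\<Sum>z\<in>UNIV. mat_exp P t x z * P z y)) (at t)"
    by (auto intro!: derivative_eq_intros mat_exp_forward_deriv)
  then show ?thesis
    unfolding sum_mult_kappa trans_fun_eq_mat_exp by (simp add: sum_distrib_left mult.assoc)
qed

lemma trans_fun_backward_deriv:
  "((\<lambda>t. trans_fun P t x y) has_real_derivative (\<Sum>z\<in>UNIV. kappa P x z * trans_fun P t z y)) (at t)"
proof -
  have "((\<lambda>t. exp (- t) * mat_exp P t x y) has_real_derivative
      exp (- t) * (- 1) * mat_exp P t x y + exp (- t) * (\<Sum>z\<in>UNIV. P x z * mat_exp P t z y)) (at t)"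
    by (auto intro!: derivative_eq_intros mat_exp_backward_deriv)
  then show ?thesis
    unfolding sum_kappa_mult trans_fun_eq_mat_exp by (simp add: sum_distrib_left mult.left_commute)
qed

lemma trans_fun_nonneg: "0 \<le> t \<Longrightarrow> 0 \<le> trans_fun P t x y"
  unfolding trans_fun_def
  by (intro suminf_nonneg summable_trans_fun mult_nonneg_nonneg poisson_pmf_nonneg mat_pow_nonneg)

lemma trans_fun_diag_ge: "0 \<le> t \<Longrightarrow> exp (- t) \<le> trans_fun P t x x"
proof -
  assume t: "0 \<le> t"
  have "(\<Sum>d\<in>{0}. poisson_pmf t d * mat_pow P d x x) \<le> trans_fun P t x x"
    unfolding trans_fun_def by (rule sum_le_suminf[OF summable_trans_fun[OF t]])
      (auto intro!: mult_nonneg_nonneg poisson_pmf_nonneg t mat_pow_nonneg)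
  then show ?thesis by (simp add: poisson_pmf_def)
qed

lemma trans_fun_invariant:
  assumes "invariant_distribution P q" and t: "0 \<le> t"
  shows "(\<Sum>x\<in>UNIV. q x * trans_fun P t x y) = q y"
proof -
  have "(\<Sum>x\<in>UNIV. q x * trans_fun P t x y) = (\<Sum>x\<in>UNIV. \<Sum>d. q x * (poisson_pmf t d * mat_pow P d x y))"
    unfolding trans_fun_def by (intro sum.cong refl suminf_mult[symmetric] summable_trans_fun t)
  also have "\<dots> = (\<Sum>d. \<Sum>x\<in>UNIV. q x * (poisson_pmf t d * mat_pow P d x y))"
    by (rule suminf_sum[symmetric]) (intro summable_mult summable_trans_fun t)
  also have "\<dots> = (\<Sum>d. poisson_pmf t d * q y)"
  proof (rule suminf_cong)
    fix d
    have "(\<Sum>x\<in>UNIV. q x * (poisson_pmf t d * mat_pow P d x y))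
        = poisson_pmf t d * (\<Sum>x\<in>UNIV. q x * mat_pow P d x y)"
      by (simp add: sum_distrib_left mult.left_commute)
    then show "(\<Sum>x\<in>UNIV. q x * (poisson_pmf t d * mat_pow P d x y)) = poisson_pmf t d * q y"
      using mat_pow_invariant[OF assms(1)] by simp
  qed
  also have "\<dots> = q y"
    using sums_mult2[OF sums_poisson_pmf[of t], of "q y"] by (simp add: sums_iff)
  finally show ?thesis .
qed

end

section \<open>Finite-dimensional distributions of the continuous-time chain\<close>

lemma measurable_map_list:
  fixes f :: "'i \<Rightarrow> 'w \<Rightarrow> 'a::countable"
  assumes "\<And>i. f i \<in> measurable S (count_space UNIV)"
  shows "(\<lambda>\<omega>. map (\<lambda>i. f i \<omega>) xs) \<in> measurable S (count_space UNIV)"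
proof (induction xs)
  case Nil
  then show ?case by simp
next
  case (Cons x xs)
  have "(\<lambda>\<omega>. (f x \<omega>, map (\<lambda>i. f i \<omega>) xs)) \<in> measurable S (count_space UNIV \<Otimes>\<^sub>M count_space UNIV)"
    using Cons assms by (intro measurable_Pair) auto
  then have "(\<lambda>\<omega>. (f x \<omega>, map (\<lambda>i. f i \<omega>) xs)) \<in> measurable S (count_space UNIV)"
    by (simp add: pair_measure_countable)
  then have "(\<lambda>p. fst p # snd p) \<circ> (\<lambda>\<omega>. (f x \<omega>, map (\<lambda>i. f i \<omega>) xs)) \<in> measurable S (count_space UNIV)"
    by (rule measurable_comp) simp
  then show ?case by (simp add: o_def)
qed

lemma measurable_sigma_level_sets:
  fixes f :: "'w \<Rightarrow> 'a::countable"
  assumes "G \<subseteq> Pow \<Omega>" "\<And>a. {\<omega>\<in>\<Omega>. f \<omega> = a} \<in> G"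
  shows "f \<in> measurable (sigma \<Omega> G) (count_space UNIV)"
proof -
  have "f -` {a} \<inter> space (sigma \<Omega> G) \<in> sets (sigma \<Omega> G)" for a
  proof -
    have "f -` {a} \<inter> space (sigma \<Omega> G) = {\<omega>\<in>\<Omega>. f \<omega> = a}" using assms(1) by auto
    moreover have "{\<omega>\<in>\<Omega>. f \<omega> = a} \<in> sets (sigma \<Omega> G)" using assms by auto
    ultimately show ?thesis by simp
  qed
  then show ?thesis unfolding measurable_count_space_eq2_countable by auto
qed

lemma eq_iff_increments_eq:
  fixes f g :: "nat \<Rightarrow> nat"
  assumes "f 0 = g 0" "\<And>i. i < n \<Longrightarrow> f i \<le> f (Suc i)" "\<And>i. i < n \<Longrightarrow> g i \<le> g (Suc i)"
  shows "(\<forall>j\<le>n. f j = g j) \<longleftrightarrow> (\<forall>i<n. f (Suc i) - f i = g (Suc i) - g i)"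
  using assms
proof (induction n)
  case 0
  then show ?case by simp
next
  case (Suc n)
  have IH: "(\<forall>j\<le>n. f j = g j) \<longleftrightarrow> (\<forall>i<n. f (Suc i) - f i = g (Suc i) - g i)"
    using Suc.prems by (intro Suc.IH) auto
  have a: "f n \<le> f (Suc n)" "g n \<le> g (Suc n)" using Suc.prems by auto
  show ?case
  proof
    assume h: "\<forall>j\<le>Suc n. f j = g j"
    then show "\<forall>i<Suc n. f (Suc i) - f i = g (Suc i) - g i"
      by (metis Suc_leI less_imp_le_nat)
  next
    assume h: "\<forall>i<Suc n. f (Suc i) - f i = g (Suc i) - g i"
    then have "\<forall>j\<le>n. f j = g j" using IH by auto
    moreover have "f (Suc n) = g (Suc n)"
      using h[rule_format, of n] calculation a by simp
    ultimately show "\<forall>j\<le>Suc n. f j = g j" by (simp add: le_Suc_eq)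
  qed
qed

lemma sorted_Cons_0_nth_nonneg: "sorted (0#ts) \<Longrightarrow> i < length (0#ts) \<Longrightarrow> (0::real) \<le> (0#ts)!i"
  using sorted_nth_mono[of "0#ts" 0 i] by simp

fun trans_prod :: "(real \<Rightarrow> 's \<Rightarrow> 's \<Rightarrow> real) \<Rightarrow> real \<Rightarrow> 's \<Rightarrow> (real \<times> 's) list \<Rightarrow> real" where
  "trans_prod p t0 x0 [] = 1"
| "trans_prod p t0 x0 ((t,x)#r) = p (t - t0) x0 x * trans_prod p t x r"

lemma trans_prod_snoc: "trans_prod p t0 x0 (tx@[(t,y)])
    = trans_prod p t0 x0 tx * p (t - last (t0 # map fst tx)) (last (x0 # map snd tx)) y"
  by (induction tx arbitrary: t0 x0) auto

lemma sorted_le_last: "sorted xs \<Longrightarrow> x \<in> set xs \<Longrightarrow> x \<le> last xs"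
proof -
  assume s: "sorted xs" and x: "x \<in> set xs"
  then obtain i where i: "i < length xs" "x = xs!i" by (metis in_set_conv_nth)
  then have "xs \<noteq> []" by auto
  then have "last xs = xs!(length xs - 1)" by (simp add: last_conv_nth)
  then show ?thesis using sorted_nth_mono[OF s, of i "length xs - 1"] i by simp
qed

lemma sorted_snoc_last_iff: "sorted (xs@[b]) \<longleftrightarrow> sorted xs \<and> (xs \<noteq> [] \<longrightarrow> last xs \<le> b)"
  by (auto simp: sorted_append dest: sorted_le_last intro: order_trans)

lemma nth_Cons_snoc: "i \<le> length xs \<Longrightarrow> (a#xs@[b])!i = (a#xs)!i"
  by (cases i) (auto simp: nth_append)

lemma nth_Cons_length: "(a#xs)!(length xs) = last (a#xs)"
  by (induction xs arbitrary: a) auto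

locale ctmc = prob_space M + stochastic_matrix P
  for M :: "'w measure" and P :: "'s::finite \<Rightarrow> 's \<Rightarrow> real" +
  fixes q mu :: "'s \<Rightarrow> real" and Z :: "nat \<Rightarrow> 'w \<Rightarrow> 's" and N :: "real \<Rightarrow> 'w \<Rightarrow> nat"
  assumes irreducible: "irreducible_chain P" and invariant: "invariant_distribution P q"
    and mu_pos: "\<And>x. 0 < mu x"
    and markov: "markov_chain M Z P mu" and poisson: "poisson_process1 M N"
    and independent: "independent_processes M Z N"
begin

abbreviation X :: "real \<Rightarrow> 'w \<Rightarrow> 's" where "X \<equiv> ctchain Z N"

lemma q_pos: "0 < q y"
  using invariant_distribution_pos[OF irreducible invariant] .

lemma Z_measurable[measurable]: "Z n \<in> measurable M (count_space UNIV)"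
  using markov unfolding markov_chain_def by auto

definition chain_event :: "nat \<Rightarrow> 's list set \<Rightarrow> 'w set" where
  "chain_event k B = {\<omega>\<in>space M. map (\<lambda>j. Z j \<omega>) [0..<Suc k] \<in> B}"

definition path_prob :: "'s list \<Rightarrow> real" where
  "path_prob zs = mu (zs!0) * (\<Prod>i<length zs - 1. P (zs!i) (zs!(Suc i)))"

lemma sets_chain_event[measurable]: "chain_event k B \<in> sets M"
proof -
  have "(\<lambda>\<omega>. map (\<lambda>j. Z j \<omega>) [0..<Suc k]) \<in> measurable M (count_space UNIV)"
    by (rule measurable_map_list) simp
  then have "(\<lambda>\<omega>. map (\<lambda>j. Z j \<omega>) [0..<Suc k]) -` B \<inter> space M \<in> sets M"
    by (rule measurable_sets) simp
  then show ?thesis unfolding chain_event_def by (simp add: Int_def vimage_def conj_commute)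
qed

lemma measure_chain_event_singleton: assumes "length zs
    = Suc k" shows "measure M (chain_event k {zs}) = path_prob zs"
proof -
  have e: "map (\<lambda>j. Z j \<omega>) [0..<Suc k] = zs \<longleftrightarrow> (\<forall>i\<le>k. Z i \<omega> = zs!i)" for \<omega>
    using assms unfolding list_eq_iff_nth_eq by (auto simp del: upt_Suc simp add: less_Suc_eq_le)
  have "chain_event k {zs} = {\<omega>\<in>space M. \<forall>i\<le>k. Z i \<omega> = (\<lambda>i. zs!i) i}"
    unfolding chain_event_def using e by blast
  then show ?thesis using markov assms unfolding markov_chain_def path_prob_def by simp
qed

lemma measure_chain_event: assumes "\<forall>zs\<in>B. length zs = Suc k"
  shows "measure M (chain_event k B) = (\<Sum>zs\<in>B. path_prob zs)"
proof -
  have "B \<subseteq> {zs::'s list. length zs = Suc k}" using assms by blast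
  then have fin: "finite B"
    using finite_lists_length_eq[of "UNIV::'s set" "Suc k"] by (auto intro: finite_subset)
  have eq: "chain_event k B = (\<Union>zs\<in>B. chain_event k {zs})" unfolding chain_event_def by blast
  have disj: "disjoint_family_on (\<lambda>zs. chain_event k {zs}) B"
    unfolding disjoint_family_on_def chain_event_def by blast
  have "measure M (\<Union>zs\<in>B. chain_event k {zs}) = (\<Sum>zs\<in>B. measure M (chain_event k {zs}))"
    by (rule measure_finite_Union[OF fin _ disj]) auto
  also have "\<dots> = (\<Sum>zs\<in>B. path_prob zs)"
    using assms by (intro sum.cong refl measure_chain_event_singleton) auto
  finally show ?thesis using eq by simp
qed

lemma path_prob_snoc: assumes "length zs = Suc k" shows "path_prob (zs@[w])
    = path_prob zs * P (last zs) w"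
proof -
  have "(\<Prod>i<Suc k. P ((zs@[w])!i) ((zs@[w])!(Suc i))) = (\<Prod>i<k. P (zs!i) (zs!(Suc i))) * P (zs!k) w"
    using assms by (simp add: nth_append)
  moreover have "(zs@[w])!0 = zs!0" using assms by (simp add: nth_append)
  moreover have "last zs = zs!k" using assms by (cases zs rule: rev_cases) (auto simp: nth_append)
  ultimately show ?thesis using assms unfolding path_prob_def by simp
qed

lemma chain_event_Suc_snoc: "\<omega> \<in> chain_event (Suc k) ((\<lambda>zs. zs @ [w]) ` B)
    \<longleftrightarrow> \<omega> \<in> chain_event k B \<and> Z (Suc k) \<omega> = w"
proof -
  have e: "map (\<lambda>j. Z j \<omega>) [0..<Suc (Suc k)] = map (\<lambda>j. Z j \<omega>) [0..<Suc k] @ [Z (Suc k) \<omega>]"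
    by (simp del: upt_Suc add: upt_Suc_append)
  show ?thesis unfolding chain_event_def mem_Collect_eq e by blast
qed

lemma chain_event_last: "\<forall>zs\<in>B. last zs = x \<Longrightarrow> \<omega> \<in> chain_event k B \<Longrightarrow> Z k \<omega> = x"
proof -
  assume a: "\<forall>zs\<in>B. last zs = x" "\<omega> \<in> chain_event k B"
  then have "last (map (\<lambda>j. Z j \<omega>) [0..<Suc k]) = x" unfolding chain_event_def by auto
  then show "Z k \<omega> = x" by (simp del: upt_Suc add: upt_Suc_append)
qed

lemma measure_chain_event_snoc:
  assumes B: "\<forall>zs\<in>B. length zs = Suc k \<and> last zs = x"
  shows "measure M (chain_event (Suc k) ((\<lambda>zs. zs @ [w]) ` B)) = measure M (chain_event k B) * P x w"
proof -
  have "measure M (chain_event (Suc k) ((\<lambda>zs. zs @ [w]) ` B)) = (\<Sum>zs\<in>(\<lambda>zs. zs @ [w]) ` B. path_prob zs)"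
    using B by (intro measure_chain_event) auto
  also have "\<dots> = (\<Sum>zs\<in>B. path_prob (zs @ [w]))"
    by (rule sum.reindex_cong[where l="\<lambda>zs. zs @ [w]"]) (auto simp: inj_on_def)
  also have "\<dots> = (\<Sum>zs\<in>B. path_prob zs * P x w)"
    using B by (intro sum.cong refl) (simp add: path_prob_snoc)
  also have "\<dots> = measure M (chain_event k B) * P x w"
    using B by (simp add: measure_chain_event sum_distrib_right)
  finally show ?thesis .
qed

lemma measure_chain_event_Markov:
  assumes "\<forall>zs\<in>B. length zs = Suc k \<and> last zs = x"
  shows "measure M (chain_event k B \<inter> {\<omega>\<in>space M. Z (k+d) \<omega> = y})
      = measure M (chain_event k B) * mat_pow P d x y"
  using assms
proof (induction d arbitrary: k B x)
  case 0
  have l: "\<And>\<omega>. \<omega> \<in> chain_event k B \<Longrightarrow> Z k \<omega> = x" using 0 chain_event_last by blast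
  show ?case
  proof (cases "x = y")
    case True
    then have "chain_event k B \<inter> {\<omega>\<in>space M. Z (k+0) \<omega> = y} = chain_event k B" using l
      unfolding chain_event_def by auto
    then show ?thesis using True by simp
  next
    case False
    then have "chain_event k B \<inter> {\<omega>\<in>space M. Z (k+0) \<omega> = y} = {}" using l by auto
    then show ?thesis using False by simp
  qed
next
  case (Suc d)
  define Bw where "Bw w = (\<lambda>zs. zs@[w]) ` B" for w
  have eq: "chain_event k B \<inter> {\<omega>\<in>space M. Z (k+Suc d) \<omega> = y} =
     (\<Union>w\<in>UNIV. chain_event (Suc k) (Bw w) \<inter> {\<omega>\<in>space M. Z (Suc k + d) \<omega> = y})"
    by (auto simp: Bw_def chain_event_Suc_snoc)
  have disj: "disjoint_family_on (\<lambda>w. chain_event (Suc k) (Bw w) \<inter> {\<omega>\<in>space M. Z (Suc k + d) \<omega> = y}) UNIV"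
    unfolding disjoint_family_on_def by (auto simp: Bw_def chain_event_Suc_snoc)
  have "measure M (\<Union>w\<in>UNIV. chain_event (Suc k) (Bw w) \<inter> {\<omega>\<in>space M. Z (Suc k + d) \<omega> = y})
      = (\<Sum>w\<in>UNIV. measure M (chain_event (Suc k) (Bw w) \<inter> {\<omega>\<in>space M. Z (Suc k + d) \<omega> = y}))"
    by (rule measure_finite_Union[OF _ _ disj]) auto
  also have "\<dots> = (\<Sum>w\<in>UNIV. measure M (chain_event (Suc k) (Bw w)) * mat_pow P d w y)"
    using Suc.prems by (intro sum.cong refl Suc.IH) (auto simp: Bw_def)
  also have "\<dots> = (\<Sum>w\<in>UNIV. measure M (chain_event k B) * P x w * mat_pow P d w y)"
    unfolding Bw_def using measure_chain_event_snoc[OF Suc.prems] by simp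
  also have "\<dots> = measure M (chain_event k B) * mat_pow P (Suc d) x y"
    by (simp only: mat_pow_Suc_left sum_distrib_left mult.assoc)
  finally show ?case using eq by simp
qed

lemma N_measurable[measurable]: "N t \<in> measurable M (count_space UNIV)"
  using poisson unfolding poisson_process1_def by auto

lemma N_0: "\<omega> \<in> space M \<Longrightarrow> N 0 \<omega> = 0"
  using poisson unfolding poisson_process1_def by auto

lemma N_mono: assumes "\<omega> \<in> space M" "0 \<le> s" "s \<le> t" shows "N s \<omega> \<le> N t \<omega>"
proof -
  have "mono_on {0..} (\<lambda>t. N t \<omega>)" using poisson assms unfolding poisson_process1_def by auto
  then show ?thesis by (rule mono_onD) (use assms in auto)
qed

lemma measure_N_increment: "0 \<le> s \<Longrightarrow> s \<le> t \<Longrightarrow> measure M {\<omega>\<in>space M. N t \<omega> - N s \<omega> = k}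
    = poisson_pmf (t - s) k"
  using poisson unfolding poisson_process1_def poisson_pmf_def by auto

lemma N_indep_increments: "0 \<le> ts 0 \<Longrightarrow> mono ts \<Longrightarrow>
   indep_vars (\<lambda>_. count_space UNIV) (\<lambda>i \<omega>. N (ts (Suc i)) \<omega> - N (ts i) \<omega>) {..<n}"
  using poisson unfolding poisson_process1_def by auto

definition sigma_Z where "sigma_Z = sigma (space M) {{\<omega>\<in>space M. Z n \<omega> = x} | n x. True}"
definition sigma_N where "sigma_N = sigma (space M) {{\<omega>\<in>space M. N t \<omega> = k} | t k. True}"

lemma Z_measurable_sigma_Z: "Z n \<in> measurable sigma_Z (count_space UNIV)"
  unfolding sigma_Z_def by (rule measurable_sigma_level_sets) auto

lemma N_measurable_sigma_N: "N t \<in> measurable sigma_N (count_space UNIV)"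
  unfolding sigma_N_def by (rule measurable_sigma_level_sets) auto

lemma space_sigma_Z: "space sigma_Z = space M" unfolding sigma_Z_def by (subst space_measure_of) auto
lemma space_sigma_N: "space sigma_N = space M" unfolding sigma_N_def by (subst space_measure_of) auto

lemma prob_Int_sigma_Z_sigma_N: "a \<in> sets sigma_Z \<Longrightarrow> b \<in> sets sigma_N \<Longrightarrow> prob (a \<inter> b) = prob a * prob b"
  using independent unfolding independent_processes_def sigma_Z_def sigma_N_def
  by (metis (no_types, lifting) indep_setD)

lemma chain_event_sigma_Z: "chain_event k B \<in> sets sigma_Z"
proof -
  have "(\<lambda>\<omega>. map (\<lambda>j. Z j \<omega>) [0..<Suc k]) \<in> measurable sigma_Z (count_space UNIV)"
    by (rule measurable_map_list) (rule Z_measurable_sigma_Z)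
  then have "(\<lambda>\<omega>. map (\<lambda>j. Z j \<omega>) [0..<Suc k]) -` B \<inter> space sigma_Z \<in> sets sigma_Z"
    by (rule measurable_sets) simp
  then show ?thesis unfolding chain_event_def space_sigma_Z
    by (simp add: Int_def vimage_def conj_commute)
qed

lemma Z_event_sigma_Z: "{\<omega>\<in>space M. Z n \<omega> = x} \<in> sets sigma_Z"
  using measurable_sets[OF Z_measurable_sigma_Z, of "{x}" n] space_sigma_Z
    by (simp add: vimage_def Int_def conj_commute)

definition count_event :: "real list \<Rightarrow> nat list \<Rightarrow> 'w set" where
  "count_event ts ns = {\<omega>\<in>space M. map (\<lambda>t. N t \<omega>) ts = ns}"

lemma count_event_sigma_N: "count_event ts ns \<in> sets sigma_N"
proof -
  have "(\<lambda>\<omega>. map (\<lambda>t. N t \<omega>) ts) \<in> measurable sigma_N (count_space UNIV)"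
    by (rule measurable_map_list) (rule N_measurable_sigma_N)
  then have "(\<lambda>\<omega>. map (\<lambda>t. N t \<omega>) ts) -` {ns} \<inter> space sigma_N \<in> sets sigma_N"
    by (rule measurable_sets) simp
  then show ?thesis unfolding count_event_def space_sigma_N
    by (simp add: Int_def vimage_def conj_commute)
qed

lemma sets_count_event[measurable]: "count_event ts ns \<in> sets M"
proof -
  have "(\<lambda>\<omega>. map (\<lambda>t. N t \<omega>) ts) \<in> measurable M (count_space UNIV)"
    by (rule measurable_map_list) simp
  then have "(\<lambda>\<omega>. map (\<lambda>t. N t \<omega>) ts) -` {ns} \<inter> space M \<in> sets M"
    by (rule measurable_sets) simp
  then show ?thesis unfolding count_event_def by (simp add: Int_def vimage_def conj_commute)
qed

lemma count_event_iff_increments: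
  assumes st: "sorted (0#ts)" and sn: "sorted (0#ns)" and len: "length ns = length ts"
    and \<omega>: "\<omega> \<in> space M"
  shows "\<omega> \<in> count_event ts ns \<longleftrightarrow>
    (\<forall>i<length ts. N ((0#ts)!Suc i) \<omega> - N ((0#ts)!i) \<omega> = (0#ns)!Suc i - (0#ns)!i)"
proof -
  define F where "F j = N ((0#ts)!j) \<omega>" for j
  define G where "G j = (0#ns)!j" for j
  have "F i \<le> F (Suc i)" if "i < length ts" for i
    unfolding F_def using \<omega> that
    by (intro N_mono sorted_Cons_0_nth_nonneg[OF st] sorted_nth_mono[OF st]) auto
  moreover have "G i \<le> G (Suc i)" if "i < length ts" for i
    unfolding G_def using len that by (intro sorted_nth_mono[OF sn]) auto
  moreover have "F 0 = G 0" unfolding F_def G_def using N_0[OF \<omega>] by simp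
  ultimately have "(\<forall>j\<le>length ts. F j = G j) \<longleftrightarrow> (\<forall>i<length ts. F (Suc i) - F i = G (Suc i) - G i)"
    by (intro eq_iff_increments_eq) auto
  moreover have "(\<forall>j\<le>length ts. F j = G j) \<longleftrightarrow> (\<forall>i<length ts. F (Suc i) = G (Suc i))"
  proof
    assume H: "\<forall>i<length ts. F (Suc i) = G (Suc i)"
    show "\<forall>j\<le>length ts. F j = G j"
    proof (intro allI impI)
      fix j assume "j \<le> length ts"
      then show "F j = G j" using H \<open>F 0 = G 0\<close> by (cases j) auto
    qed
  qed (auto simp: Suc_le_eq)
  moreover have "\<omega> \<in> count_event ts ns \<longleftrightarrow> (\<forall>i<length ts. F (Suc i) = G (Suc i))"
    unfolding count_event_def F_def G_def using \<omega> len by (auto simp: list_eq_iff_nth_eq)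
  ultimately show ?thesis unfolding F_def G_def by simp
qed

lemma prob_count_event:
  assumes st: "sorted (0#ts)" and sn: "sorted (0#ns)" and len: "length ns = length ts"
  shows "prob (count_event ts ns)
    = (\<Prod>i<length ts. poisson_pmf ((0#ts)!Suc i - (0#ts)!i) ((0#ns)!Suc i - (0#ns)!i))"
proof (cases "ts = []")
  case True
  then have "count_event ts ns = space M" using len unfolding count_event_def by auto
  then show ?thesis using True by (simp add: prob_space)
next
  case False
  define n where "n = length ts"
  define ts' where "ts' i = (0#ts)!(min i n)" for i
  have "mono ts'"
    unfolding mono_def ts'_def n_def by (intro allI impI sorted_nth_mono[OF st]) auto
  then have indep: "indep_vars (\<lambda>_. count_space UNIV) (\<lambda>i \<omega>. N (ts' (Suc i)) \<omega> - N (ts' i) \<omega>) {..<n}"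
    by (intro N_indep_increments) (simp add: ts'_def)
  define d where "d i = (0#ns)!Suc i - (0#ns)!i" for i
  let ?inc = "\<lambda>i \<omega>. N (ts' (Suc i)) \<omega> - N (ts' i) \<omega>"
  have ts': "ts' (Suc i) = (0#ts)!Suc i" "ts' i = (0#ts)!i" if "i < length ts" for i
    using that unfolding ts'_def n_def by auto
  have count_event_eq: "count_event ts ns = (\<Inter>i\<in>{..<n}. ?inc i -` {d i} \<inter> space M)"
  proof (intro set_eqI)
    fix \<omega>
    show "\<omega> \<in> count_event ts ns \<longleftrightarrow> \<omega> \<in> (\<Inter>i\<in>{..<n}. ?inc i -` {d i} \<inter> space M)"
    proof (cases "\<omega> \<in> space M")
      case True
      then show ?thesis
        using count_event_iff_increments[OF st sn len True] unfolding n_def d_def by (auto simp: ts')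
    next
      case False
      then show ?thesis using \<open>ts \<noteq> []\<close> unfolding count_event_def n_def by auto
    qed
  qed
  have "prob (count_event ts ns) = (\<Prod>i\<in>{..<n}. prob (?inc i -` {d i} \<inter> space M))"
    unfolding count_event_eq by (rule indep_varsD_finite[OF indep]) (use False n_def in auto)
  also have "\<dots> = (\<Prod>i<n. poisson_pmf ((0#ts)!Suc i - (0#ts)!i) (d i))"
  proof (intro prod.cong refl)
    fix i assume i: "i \<in> {..<n}"
    have "0 \<le> (0#ts)!i"
      by (intro sorted_Cons_0_nth_nonneg[OF st]) (use i in \<open>simp add: n_def\<close>)
    moreover have "(0#ts)!i \<le> (0#ts)!Suc i"
      by (intro sorted_nth_mono[OF st]) (use i in \<open>simp_all add: n_def\<close>)
    moreover have "ts' (Suc i) = (0#ts)!Suc i" "ts' i = (0#ts)!i" using i ts' n_def by auto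
    moreover have "?inc i -` {d i} \<inter> space M = {\<omega>\<in>space M. N (ts' (Suc i)) \<omega> - N (ts' i) \<omega> = d i}"
      by auto
    ultimately show "prob (?inc i -` {d i} \<inter> space M) = poisson_pmf ((0#ts)!Suc i - (0#ts)!i) (d i)"
      by (simp add: measure_N_increment)
  qed
  finally show ?thesis unfolding n_def d_def .
qed

lemma prob_count_event_snoc:
  assumes st: "sorted (0#ts)" and sn: "sorted (0#ns)" and len: "length ns = length ts"
    and t: "last (0#ts) \<le> t" and k: "last (0#ns) \<le> k"
  shows "prob (count_event (ts@[t]) (ns@[k]))
    = prob (count_event ts ns) * poisson_pmf (t - last (0#ts)) (k - last (0#ns))"
proof -
  define n where "n = length ts"
  have st': "sorted (0#ts@[t])" using st t sorted_snoc_last_iff[of "0#ts" t] by simp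
  have sn': "sorted (0#ns@[k])" using sn k sorted_snoc_last_iff[of "0#ns" k] by simp
  have "(\<Prod>i<n. poisson_pmf ((0#ts@[t])!Suc i - (0#ts@[t])!i) ((0#ns@[k])!Suc i - (0#ns@[k])!i))
      = (\<Prod>i<n. poisson_pmf ((0#ts)!Suc i - (0#ts)!i) ((0#ns)!Suc i - (0#ns)!i))"
  proof (intro prod.cong refl)
    fix i assume "i \<in> {..<n}"
    then have i: "Suc i \<le> length ts" "i \<le> length ts" "Suc i \<le> length ns" "i \<le> length ns"
      using len unfolding n_def by auto
    show "poisson_pmf ((0#ts@[t])!Suc i - (0#ts@[t])!i) ((0#ns@[k])!Suc i - (0#ns@[k])!i)
      = poisson_pmf ((0#ts)!Suc i - (0#ts)!i) ((0#ns)!Suc i - (0#ns)!i)"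
      using nth_Cons_snoc[OF i(1)] nth_Cons_snoc[OF i(2)] nth_Cons_snoc[OF i(3)] nth_Cons_snoc[OF i(4)]
      by metis
  qed
  moreover have "(0#ts@[t])!Suc n = t" "(0#ns@[k])!Suc n = k"
    using len unfolding n_def by (auto simp: nth_append)
  moreover have "(0#ts@[t])!n = last (0#ts)" "(0#ns@[k])!n = last (0#ns)"
    using nth_Cons_snoc[of n ts 0 t] nth_Cons_length[of 0 ts]
      nth_Cons_snoc[of n ns 0 k] nth_Cons_length[of 0 ns] len
    unfolding n_def by simp_all
  ultimately show ?thesis
    using prob_count_event[OF st' sn'] prob_count_event[OF st sn len] len unfolding n_def by simp
qed

definition cyl :: "'s \<Rightarrow> (real \<times> 's) list \<Rightarrow> 'w set" where
  "cyl m tx = {\<omega>\<in>space M. Z 0 \<omega> = m \<and> (\<forall>i<length tx. Z (N (fst (tx!i)) \<omega>) \<omega> = snd (tx!i))}"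

definition last_time :: "(real \<times> 's) list \<Rightarrow> real" where "last_time tx = last (0 # map fst tx)"
definition last_state :: "'s \<Rightarrow> (real \<times> 's) list \<Rightarrow> 's" where "last_state m tx = last (m # map snd tx)"

text \<open>\<open>prob (cyl m tx)\<close> is computed by splitting the cylinder according to the values \<open>ns\<close> of
  \<open>N\<close> at the times of \<open>tx\<close>: each piece is the intersection of an event of \<open>Z\<close> with an
  event of \<open>N\<close>, and these are independent.\<close>
definition cyl_count :: "'s \<Rightarrow> (real \<times> 's) list \<Rightarrow> nat \<Rightarrow> 'w set" where
  "cyl_count m tx k = cyl m tx \<inter> {\<omega>\<in>space M. N (last_time tx) \<omega> = k}"

definition count_vectors :: "(real \<times> 's) list \<Rightarrow> nat \<Rightarrow> nat list set" where
  "count_vectors tx k = {ns. length ns = length tx \<and> sorted (0#ns) \<and> last (0#ns) = k}"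

definition chain_paths :: "'s \<Rightarrow> (real \<times> 's) list \<Rightarrow> nat list \<Rightarrow> nat \<Rightarrow> 's list set" where
  "chain_paths m tx ns k = {zs. length zs = Suc k \<and> zs!0 = m \<and> (\<forall>i<length tx. zs!(ns!i) = snd (tx!i))}"

definition cyl_piece :: "'s \<Rightarrow> (real \<times> 's) list \<Rightarrow> nat list \<Rightarrow> nat \<Rightarrow> 'w set" where
  "cyl_piece m tx ns k = count_event (map fst tx) ns \<inter> chain_event k (chain_paths m tx ns k)"

lemma X_measurable[measurable]: "X t \<in> measurable M (count_space UNIV)"
  unfolding ctchain_def by (rule measurable_compose_countable'[where g="N t" and I=UNIV]) auto

lemma sets_cyl[measurable]: "cyl m tx \<in> sets M"
proof -
  have m1: "(\<lambda>\<omega>. map (\<lambda>p. Z (N (fst p) \<omega>) \<omega>) tx) \<in> measurable M (count_space UNIV)"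
    by (rule measurable_map_list) (use X_measurable in \<open>simp add: ctchain_def\<close>)
  have "(\<lambda>\<omega>. (Z 0 \<omega>, map (\<lambda>p. Z (N (fst p) \<omega>) \<omega>) tx)) \<in> measurable M (count_space UNIV \<Otimes>\<^sub>M count_space UNIV)"
    using m1 by (intro measurable_Pair) auto
  then have m2: "(\<lambda>\<omega>. (Z 0 \<omega>, map (\<lambda>p. Z (N (fst p) \<omega>) \<omega>) tx)) \<in> measurable M (count_space UNIV)"
    by (simp add: pair_measure_countable)
  have "(\<lambda>\<omega>. (Z 0 \<omega>, map (\<lambda>p. Z (N (fst p) \<omega>) \<omega>) tx)) -` {(m, map snd tx)} \<inter> space M \<in> sets M"
    by (rule measurable_sets[OF m2]) simp
  moreover have "(\<lambda>\<omega>. (Z 0 \<omega>, map (\<lambda>p. Z (N (fst p) \<omega>) \<omega>) tx)) -` {(m, map snd tx)} \<inter> space M = cyl m tx"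
    unfolding cyl_def by (auto simp: list_eq_iff_nth_eq)
  ultimately show ?thesis by simp
qed

lemma sets_cyl_count[measurable]: "cyl_count m tx k \<in> sets M"
  unfolding cyl_count_def by (intro sets.Int sets_cyl) measurable

lemma sets_cyl_piece[measurable]: "cyl_piece m tx ns k \<in> sets M"
  unfolding cyl_piece_def by (intro sets.Int) auto

lemma count_vectors_le: "ns \<in> count_vectors tx k \<Longrightarrow> x \<in> set ns \<Longrightarrow> x \<le> k"
  unfolding count_vectors_def using sorted_le_last[of "0#ns" x] by auto

lemma finite_count_vectors: "finite (count_vectors tx k)"
proof -
  have "count_vectors tx k \<subseteq> {ns. set ns \<subseteq> {..k} \<and> length ns = length tx}"
  proof
    fix ns assume a: "ns \<in> count_vectors tx k"
    then have "set ns \<subseteq> {..k}" using count_vectors_le by blast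
    then show "ns \<in> {ns. set ns \<subseteq> {..k} \<and> length ns = length tx}" using a
      unfolding count_vectors_def by auto
  qed
  then show ?thesis using finite_lists_length_eq[of "{..k}" "length tx"] by (auto intro: finite_subset)
qed

lemma chain_paths_last: assumes "ns \<in> count_vectors tx k" "zs \<in> chain_paths m tx ns k" shows "length zs = Suc k \<and> last zs = last_state m tx"
proof -
  have lz: "length zs = Suc k" and z0: "zs!0 = m" and zi: "\<forall>i<length tx. zs!(ns!i) = snd (tx!i)"
    using assms(2) unfolding chain_paths_def by auto
  have lastz: "last zs = zs!k" using lz by (cases zs rule: rev_cases) (auto simp: nth_append)
  show ?thesis
  proof (cases "tx = []")
    case True
    then have "k = 0" using assms(1) unfolding count_vectors_def by auto
    then show ?thesis using lz lastz z0 True unfolding last_state_def by simp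
  next
    case False
    have ln: "length ns = length tx" "last (0#ns) = k" using assms(1) unfolding count_vectors_def by auto
    then have "ns \<noteq> []" using False by auto
    then have "ns!(length tx - 1) = k" using ln by (simp add: last_conv_nth)
    moreover have "zs!(ns!(length tx - 1)) = snd (tx!(length tx - 1))" using zi False by simp
    moreover have "last_state m tx = snd (tx!(length tx - 1))" using False unfolding last_state_def
      by (simp add: last_conv_nth last_map)
    ultimately show ?thesis using lz lastz by simp
  qed
qed

lemma cyl_count_subset_pieces:
  assumes st: "sorted (0 # map fst tx)" and w: "\<omega> \<in> cyl_count m tx k"
  shows "\<omega> \<in> (\<Union>ns\<in>count_vectors tx k. cyl_piece m tx ns k)"
proof -
  from w have sp: "\<omega> \<in> space M" and z0: "Z 0 \<omega> = m"
    and xi: "\<forall>i<length tx. Z (N (fst (tx!i)) \<omega>) \<omega> = snd (tx!i)" and nl: "N (last_time tx) \<omega> = k"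
    unfolding cyl_count_def cyl_def by auto
  define ns where "ns = map (\<lambda>t. N t \<omega>) (map fst tx)"
  have e0: "0 # ns = map (\<lambda>t. N t \<omega>) (0 # map fst tx)" unfolding ns_def using N_0[OF sp] by simp
  have nonneg: "\<And>x. x \<in> set (0 # map fst tx) \<Longrightarrow> 0 \<le> x"
    using st by (auto simp: sorted_wrt_append)
  have "sorted (0#ns)" unfolding e0 sorted_map
    by (rule sorted_wrt_mono_rel[OF _ st]) (metis N_mono[OF sp] nonneg)
  moreover have "last (0#ns) = k" unfolding e0 using nl unfolding last_time_def
    by (metis last_map list.distinct(1))
  moreover have "length ns = length tx" unfolding ns_def by simp
  ultimately have nsF: "ns \<in> count_vectors tx k" unfolding count_vectors_def by auto
  have "\<omega> \<in> count_event (map fst tx) ns" unfolding count_event_def ns_def using sp by simp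
  moreover have "\<omega> \<in> chain_event k (chain_paths m tx ns k)"
  proof -
    have "\<And>i. i < length tx \<Longrightarrow> ns!i \<le> k" using count_vectors_le[OF nsF] by (simp add: ns_def)
    then have "\<forall>i<length tx. map (\<lambda>j. Z j \<omega>) [0..<Suc k] ! (ns!i) = snd (tx!i)"
      using xi by (auto simp del: upt_Suc simp: ns_def nth_upt less_Suc_eq_le)
    then show ?thesis unfolding chain_event_def chain_paths_def using sp z0 by (auto simp del: upt_Suc)
  qed
  ultimately show ?thesis using nsF unfolding cyl_piece_def by auto
qed

lemma cyl_piece_subset_cyl_count:
  assumes nsF: "ns \<in> count_vectors tx k" and "\<omega> \<in> cyl_piece m tx ns k"
  shows "\<omega> \<in> cyl_count m tx k"
proof -
  have w1: "\<omega> \<in> count_event (map fst tx) ns" and w2: "\<omega> \<in> chain_event k (chain_paths m tx ns k)"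
    using assms(2) unfolding cyl_piece_def by auto
  have sp: "\<omega> \<in> space M" using w1 unfolding count_event_def by auto
  have nsi: "\<And>i. i < length tx \<Longrightarrow> N (fst (tx!i)) \<omega> = ns!i"
    using w1 unfolding count_event_def by (auto simp: list_eq_iff_nth_eq)
  have le: "\<And>i. i < length tx \<Longrightarrow> ns!i \<le> k" using count_vectors_le[OF nsF] nsF
    unfolding count_vectors_def by auto
  have zB: "map (\<lambda>j. Z j \<omega>) [0..<Suc k] \<in> chain_paths m tx ns k" using w2
    unfolding chain_event_def by auto
  have "Z 0 \<omega> = m" using zB unfolding chain_paths_def by (auto simp del: upt_Suc)
  moreover have "\<forall>i<length tx. Z (N (fst (tx!i)) \<omega>) \<omega> = snd (tx!i)"
  proof (intro allI impI)
    fix i assume i: "i < length tx"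
    have "map (\<lambda>j. Z j \<omega>) [0..<Suc k] ! (ns!i) = snd (tx!i)" using zB i unfolding chain_paths_def by auto
    then show "Z (N (fst (tx!i)) \<omega>) \<omega> = snd (tx!i)" using le[OF i] nsi[OF i]
      by (simp del: upt_Suc add: nth_upt less_Suc_eq_le)
  qed
  moreover have "N (last_time tx) \<omega> = k"
  proof (cases "tx = []")
    case True
    then show ?thesis using nsF N_0[OF sp] unfolding count_vectors_def last_time_def by auto
  next
    case False
    have ln: "length ns = length tx" "last (0#ns) = k" using nsF unfolding count_vectors_def by auto
    then have "ns \<noteq> []" using False by auto
    then have "ns!(length tx - 1) = k" using ln by (simp add: last_conv_nth)
    moreover have "last_time tx = fst (tx!(length tx - 1))" using False unfolding last_time_def
      by (simp add: last_conv_nth last_map)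
    ultimately show ?thesis using nsi[of "length tx - 1"] False by simp
  qed
  ultimately show ?thesis unfolding cyl_count_def cyl_def using sp by auto
qed

lemma cyl_count_eq_Union_pieces:
  "sorted (0 # map fst tx) \<Longrightarrow> cyl_count m tx k = (\<Union>ns\<in>count_vectors tx k. cyl_piece m tx ns k)"
  using cyl_count_subset_pieces cyl_piece_subset_cyl_count by blast

lemma disjoint_cyl_pieces: "disjoint_family_on (\<lambda>ns. cyl_piece m tx ns k) (count_vectors tx k)"
  unfolding disjoint_family_on_def cyl_piece_def count_event_def by auto

lemma last_time_nonneg: "sorted (0 # map fst tx) \<Longrightarrow> 0 \<le> last_time tx"
  unfolding last_time_def using sorted_le_last[of "0 # map fst tx" 0]
  by (metis last_in_set list.distinct(1) list.set_intros(1) sorted_simps(2))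

lemma sorted_times_snoc_iff: "sorted (0 # map fst (tx@[(t,y)]))
    \<longleftrightarrow> sorted (0 # map fst tx) \<and> last_time tx \<le> t"
proof -
  have "0 # map fst (tx@[(t,y)]) = (0 # map fst tx) @ [t]" by simp
  then show ?thesis unfolding last_time_def using sorted_snoc_last_iff[of "0 # map fst tx" t] by simp
qed

lemma prob_cyl_piece_step:
  assumes nsF: "ns \<in> count_vectors tx k" and st: "sorted (0 # map fst tx)"
    and tt: "last_time tx \<le> t" and kk: "k \<le> k'"
  shows "prob (cyl_piece m tx ns k \<inter> {\<omega>\<in>space M. N t \<omega> = k'} \<inter> {\<omega>\<in>space M. Z k' \<omega> = y})
       = prob (cyl_piece m tx ns k) * (poisson_pmf (t - last_time tx) (k'-k) * mat_pow P (k'-k) (last_state m tx) y)"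
proof -
  define ts where "ts = map fst tx"
  define B where "B = chain_paths m tx ns k"
  have lnts: "length ns = length ts" and sn: "sorted (0#ns)" and lns: "last (0#ns) = k"
    using nsF unfolding count_vectors_def ts_def by auto
  have kk': "k + (k'-k) = k'" using kk by simp
  have e1: "cyl_piece m tx ns k \<inter> {\<omega>\<in>space M. N t \<omega> = k'} \<inter> {\<omega>\<in>space M. Z k' \<omega> = y}
      = (chain_event k B \<inter> {\<omega>\<in>space M. Z (k + (k'-k)) \<omega> = y}) \<inter> count_event (ts@[t]) (ns@[k'])"
    unfolding cyl_piece_def count_event_def B_def ts_def kk' by auto
  have e2: "cyl_piece m tx ns k = chain_event k B \<inter> count_event ts ns"
    unfolding cyl_piece_def B_def ts_def by auto
  have i1: "prob ((chain_event k B \<inter> {\<omega>\<in>space M. Z (k + (k'-k)) \<omega> = y}) \<inter> count_event (ts@[t]) (ns@[k']))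
     = prob (chain_event k B \<inter> {\<omega>\<in>space M. Z (k + (k'-k)) \<omega> = y}) * prob (count_event (ts@[t]) (ns@[k']))"
    by (intro prob_Int_sigma_Z_sigma_N sets.Int chain_event_sigma_Z Z_event_sigma_Z count_event_sigma_N)
  have i2: "prob (chain_event k B \<inter> count_event ts ns)
      = prob (chain_event k B) * prob (count_event ts ns)"
    by (intro prob_Int_sigma_Z_sigma_N chain_event_sigma_Z count_event_sigma_N)
  have mk: "prob (chain_event k B \<inter> {\<omega>\<in>space M. Z (k + (k'-k)) \<omega> = y})
      = prob (chain_event k B) * mat_pow P (k'-k) (last_state m tx) y"
    using chain_paths_last[OF nsF] unfolding B_def by (intro measure_chain_event_Markov) auto
  have w: "prob (count_event (ts@[t]) (ns@[k']))
      = prob (count_event ts ns) * poisson_pmf (t - last_time tx) (k'-k)"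
    using prob_count_event_snoc[OF _ sn lnts, of t k'] st tt kk lns
      unfolding ts_def last_time_def by simp
  have "prob (cyl_piece m tx ns k \<inter> {\<omega>\<in>space M. N t \<omega> = k'} \<inter> {\<omega>\<in>space M. Z k' \<omega> = y})
     = prob ((chain_event k B \<inter> {\<omega>\<in>space M. Z (k + (k'-k)) \<omega> = y}) \<inter> count_event (ts@[t]) (ns@[k']))"
    by (rule arg_cong[where f=prob, OF e1])
  also have "\<dots> = prob (chain_event k B) * mat_pow P (k'-k) (last_state m tx) y
      * (prob (count_event ts ns) * poisson_pmf (t - last_time tx) (k'-k))"
    by (simp only: i1 mk w)
  also have "\<dots> = prob (chain_event k B \<inter> count_event ts ns)
      * (poisson_pmf (t - last_time tx) (k'-k) * mat_pow P (k'-k) (last_state m tx) y)"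
    by (simp add: i2)
  also have "\<dots> = prob (cyl_piece m tx ns k)
      * (poisson_pmf (t - last_time tx) (k'-k) * mat_pow P (k'-k) (last_state m tx) y)"
    by (simp only: e2)
  finally show ?thesis .
qed

lemma prob_cyl_count_step:
  assumes st: "sorted (0 # map fst tx)" and tt: "last_time tx \<le> t" and kk: "k \<le> k'"
  shows "prob (cyl_count m tx k \<inter> {\<omega>\<in>space M. N t \<omega> = k'} \<inter> {\<omega>\<in>space M. Z k' \<omega> = y})
       = prob (cyl_count m tx k) * (poisson_pmf (t - last_time tx) (k'-k) * mat_pow P (k'-k) (last_state m tx) y)"
proof -
  let ?D = "{\<omega>\<in>space M. N t \<omega> = k'} \<inter> {\<omega>\<in>space M. Z k' \<omega> = y}"
  have e: "cyl_count m tx k \<inter> {\<omega>\<in>space M. N t \<omega> = k'} \<inter> {\<omega>\<in>space M. Z k' \<omega> = y}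
      = (\<Union>ns\<in>count_vectors tx k. cyl_piece m tx ns k \<inter> {\<omega>\<in>space M. N t \<omega> = k'} \<inter> {\<omega>\<in>space M. Z k' \<omega> = y})"
    unfolding cyl_count_eq_Union_pieces[OF st] by auto
  have d2: "disjoint_family_on (\<lambda>ns. cyl_piece m tx ns k \<inter> {\<omega>\<in>space M. N t \<omega> = k'} \<inter> {\<omega>\<in>space M. Z k' \<omega> = y}) (count_vectors tx k)"
    using disjoint_cyl_pieces unfolding disjoint_family_on_def by blast
  have "prob (\<Union>ns\<in>count_vectors tx k. cyl_piece m tx ns k \<inter> {\<omega>\<in>space M. N t \<omega> = k'} \<inter> {\<omega>\<in>space M. Z k' \<omega> = y})
     = (\<Sum>ns\<in>count_vectors tx k. prob (cyl_piece m tx ns k \<inter> {\<omega>\<in>space M. N t \<omega> = k'} \<inter> {\<omega>\<in>space M. Z k' \<omega> = y}))"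
    by (rule measure_finite_Union[OF finite_count_vectors _ d2]) auto
  also have "\<dots> = (\<Sum>ns\<in>count_vectors tx k. prob (cyl_piece m tx ns k) * (poisson_pmf (t - last_time tx) (k'-k) * mat_pow P (k'-k) (last_state m tx) y))"
    by (intro sum.cong refl prob_cyl_piece_step st tt kk)
  also have "\<dots> = prob (\<Union>ns\<in>count_vectors tx k. cyl_piece m tx ns k)
      * (poisson_pmf (t - last_time tx) (k'-k) * mat_pow P (k'-k) (last_state m tx) y)"
    by (subst measure_finite_Union[OF finite_count_vectors _ disjoint_cyl_pieces]) (auto simp: sum_distrib_right)
  finally have r: "prob (\<Union>ns\<in>count_vectors tx k. cyl_piece m tx ns k \<inter> {\<omega>\<in>space M. N t \<omega> = k'} \<inter> {\<omega>\<in>space M. Z k' \<omega> = y})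
    = prob (\<Union>ns\<in>count_vectors tx k. cyl_piece m tx ns k) * (poisson_pmf (t - last_time tx) (k'-k) * mat_pow P (k'-k) (last_state m tx) y)" .
  show ?thesis using r by (simp only: e) (simp only: cyl_count_eq_Union_pieces[OF st])
qed

lemma cyl_snoc: "cyl m (tx@[(t,y)]) = cyl m tx \<inter> {\<omega>\<in>space M. Z (N t \<omega>) \<omega> = y}"
  unfolding cyl_def by (auto simp: nth_append less_Suc_eq)

lemma cyl_count_snoc_eq:
  assumes st: "sorted (0 # map fst tx)" and tt: "last_time tx \<le> t"
  shows "cyl_count m (tx@[(t,y)]) k'
      = (\<Union>k\<in>{..k'}. cyl_count m tx k \<inter> {\<omega>\<in>space M. N t \<omega> = k'} \<inter> {\<omega>\<in>space M. Z k' \<omega> = y})"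
proof (intro set_eqI iffI)
  fix \<omega> assume w: "\<omega> \<in> cyl_count m (tx@[(t,y)]) k'"
  have ltt: "last_time (tx@[(t,y)]) = t" unfolding last_time_def by simp
  have sp: "\<omega> \<in> space M" and ev: "\<omega> \<in> cyl m tx" and zy: "Z (N t \<omega>) \<omega> = y" and nt: "N t \<omega> = k'"
    using w unfolding cyl_count_def cyl_snoc ltt by auto
  have "N (last_time tx) \<omega> \<le> k'" using N_mono[OF sp last_time_nonneg[OF st] tt] nt by simp
  then show "\<omega> \<in> (\<Union>k\<in>{..k'}. cyl_count m tx k \<inter> {\<omega>\<in>space M. N t \<omega> = k'} \<inter> {\<omega>\<in>space M. Z k' \<omega> = y})"
    using sp ev zy nt unfolding cyl_count_def by auto
next
  fix \<omega> assume "\<omega> \<in> (\<Union>k\<in>{..k'}. cyl_count m tx k \<inter> {\<omega>\<in>space M. N t \<omega> = k'} \<inter> {\<omega>\<in>space M. Z k' \<omega> = y})"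
  then show "\<omega> \<in> cyl_count m (tx@[(t,y)]) k'" unfolding cyl_count_def cyl_snoc last_time_def by auto
qed

lemma prob_cyl_count_snoc:
  assumes st: "sorted (0 # map fst tx)" and tt: "last_time tx \<le> t"
  shows "prob (cyl_count m (tx@[(t,y)]) k')
      = (\<Sum>k\<le>k'. prob (cyl_count m tx k) * (poisson_pmf (t - last_time tx) (k'-k) * mat_pow P (k'-k) (last_state m tx) y))"
proof -
  have d: "disjoint_family_on (\<lambda>k. cyl_count m tx k \<inter> {\<omega>\<in>space M. N t \<omega> = k'} \<inter> {\<omega>\<in>space M. Z k' \<omega> = y}) {..k'}"
    unfolding disjoint_family_on_def cyl_count_def by auto
  show ?thesis unfolding cyl_count_snoc_eq[OF st tt]
    by (subst measure_finite_Union[OF _ _ d]) (auto intro!: sum.cong prob_cyl_count_step st tt)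
qed

lemma sums_prob_cyl_count: "(\<lambda>k. prob (cyl_count m tx k)) sums prob (cyl m tx)"
proof -
  have e: "cyl m tx = (\<Union>k. cyl_count m tx k)" unfolding cyl_count_def cyl_def by auto
  have "(\<lambda>k. prob (cyl_count m tx k)) sums prob (\<Union>k. cyl_count m tx k)"
    by (rule measure_UNION) (auto simp: disjoint_family_on_def cyl_count_def emeasure_finite)
  then show ?thesis using e by simp
qed

lemma prob_cyl: "sorted (0 # map fst tx) \<Longrightarrow> prob (cyl m tx) = mu m * trans_prod (trans_fun P) 0 m tx"
proof (induction tx rule: rev_induct)
  case Nil
  have "cyl m [] = {\<omega>\<in>space M. \<forall>i\<le>0. Z i \<omega> = (\<lambda>_. m) i}" unfolding cyl_def by auto
  moreover have "prob {\<omega>\<in>space M. \<forall>i\<le>0. Z i \<omega> = (\<lambda>_. m) i} = mu m"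
    using markov[unfolded markov_chain_def, THEN conjunct2, rule_format, of 0 "\<lambda>_. m"] by simp
  ultimately show ?case by simp
next
  case (snoc p tx)
  obtain t y where p: "p = (t,y)" by (cases p)
  have st: "sorted (0 # map fst tx)" and tt: "last_time tx \<le> t"
    using snoc.prems sorted_times_snoc_iff unfolding p by auto
  define a where "a k = prob (cyl_count m tx k)" for k
  define b where "b d = poisson_pmf (t - last_time tx) d * mat_pow P d (last_state m tx) y" for d
  have Dn: "0 \<le> t - last_time tx" using tt by simp
  have "summable (\<lambda>k. prob (cyl_count m tx k))" by (rule sums_summable[OF sums_prob_cyl_count])
  then have sa: "summable (\<lambda>k. norm (a k))" unfolding a_def by simp
  have sb: "summable (\<lambda>k. norm (b k))" unfolding b_def using summable_trans_fun[OF Dn]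
    by (simp add: abs_mult poisson_pmf_nonneg[OF Dn] mat_pow_nonneg)
  have "prob (cyl m (tx@[p])) = (\<Sum>k'. prob (cyl_count m (tx@[(t,y)]) k'))"
    using sums_prob_cyl_count[of m "tx@[p]"] p by (simp add: sums_iff)
  also have "\<dots> = (\<Sum>k'. \<Sum>k\<le>k'. a k * b (k' - k))"
    unfolding prob_cyl_count_snoc[OF st tt] a_def b_def by simp
  also have "\<dots> = (\<Sum>k. a k) * (\<Sum>k. b k)" using Cauchy_product[OF sa sb] by simp
  also have "(\<Sum>k. a k) = prob (cyl m tx)" unfolding a_def using sums_prob_cyl_count
    by (simp add: sums_iff)
  also have "(\<Sum>k. b k) = trans_fun P (t - last_time tx) (last_state m tx) y"
    unfolding b_def trans_fun_def by simp
  finally show ?case using snoc.IH[OF st] unfolding p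
    by (simp add: trans_prod_snoc last_time_def last_state_def)
qed

end

lemma (in ctmc) cyl_eq: "cyl m tx = {\<omega>\<in>space M. Z 0 \<omega> = m \<and> (\<forall>p\<in>set tx. X (fst p) \<omega> = snd p)}"
  unfolding cyl_def ctchain_def by (auto simp: all_set_conv_all_nth)

lemma (in ctmc) X_cyl_eq_Union_cyl:
  "{\<omega>\<in>space M. \<forall>p\<in>set tx. X (fst p) \<omega> = snd p} = (\<Union>m\<in>UNIV. cyl m tx)"
  unfolding cyl_eq by auto

lemma (in ctmc) sets_X_event[measurable]: "{\<omega>\<in>space M. X t \<omega> = y} \<in> sets M"
  using measurable_sets[OF X_measurable, of "{y}" t] by (simp add: vimage_def Int_def conj_commute)

lemma (in ctmc) sets_X_cyl[measurable]:
  "finite S \<Longrightarrow> {\<omega>\<in>space M. \<forall>p\<in>S. X (fst p) \<omega> = snd p} \<in> sets M"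
  using sets_X_event by (intro sets.sets_Collect_finite_All) auto

lemma (in ctmc) prob_X_event:
  assumes "0 \<le> v"
  shows "prob {\<omega>\<in>space M. X v \<omega> = w} = (\<Sum>m\<in>UNIV. mu m * trans_fun P v m w)"
proof -
  have "prob (\<Union>m\<in>UNIV. cyl m [(v,w)]) = (\<Sum>m\<in>UNIV. prob (cyl m [(v,w)]))"
    by (rule measure_finite_Union) (auto simp: disjoint_family_on_def cyl_def emeasure_finite)
  also have "\<dots> = (\<Sum>m\<in>UNIV. mu m * trans_fun P v m w)"
    using assms by (intro sum.cong refl) (simp add: prob_cyl)
  finally show ?thesis using X_cyl_eq_Union_cyl[of "[(v,w)]"] by simp
qed

section \<open>The relative density and its entropy\<close>

text \<open>The chain rule for \<open>r \<mapsto> r ln r\<close> along the generator \<open>\<kappa>\<close> fails by exactly the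
  \<open>\<Psi>\<close>-remainder, which after time reversal with respect to \<open>q\<close> is \<open>q \<Lambda>\<^sup>\<bbbQ>\<close>.\<close>
lemma entropy_production_identity:
  fixes P :: "'s::finite \<Rightarrow> 's \<Rightarrow> real" and L :: "'s \<Rightarrow> real"
  assumes inv: "invariant_distribution P q" and qw: "q w \<noteq> 0" and L_pos: "\<And>y. 0 < L y"
  shows "(\<Sum>z\<in>UNIV. q z * L z * ln (L z) * kappa P z w)
    = (ln (L w) + 1) * (\<Sum>y\<in>UNIV. q y * L y * kappa P y w)
      + q w * (L w * (\<Sum>y\<in>UNIV - {w}. kappa_hat P q w y * Psi (L y / L w)))"
proof -
  define G where "G y = q y * kappa P y w * (L y * ln (L y) - L y * ln (L w) - L y + L w)" for y
  have Lw: "L w \<noteq> 0" using L_pos[of w] by simp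
  have "q w * (L w * (\<Sum>y\<in>UNIV - {w}. kappa_hat P q w y * Psi (L y / L w))) = (\<Sum>y\<in>UNIV - {w}. G y)"
    unfolding sum_distrib_left
  proof (intro sum.cong refl)
    fix y
    have ln_quot: "ln (L y / L w) = ln (L y) - ln (L w)"
      using L_pos[of y] L_pos[of w] by (simp add: ln_div)
    show "q w * (L w * (kappa_hat P q w y * Psi (L y / L w))) = G y"
      unfolding kappa_hat_def Psi_def G_def ln_quot using qw Lw by (simp add: field_simps)
  qed
  also have "\<dots> = (\<Sum>y\<in>UNIV. if y = w then 0 else G y)"
    by (subst sum.remove[of UNIV w]) (auto intro!: sum.cong)
  finally have remainder: "q w * (L w * (\<Sum>y\<in>UNIV - {w}. kappa_hat P q w y * Psi (L y / L w)))
      = (\<Sum>y\<in>UNIV. if y = w then 0 else G y)" .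
  have "(ln (L w) + 1) * (\<Sum>y\<in>UNIV. q y * L y * kappa P y w)
      - (\<Sum>z\<in>UNIV. q z * L z * ln (L z) * kappa P z w)
     + (\<Sum>y\<in>UNIV. if y = w then 0 else G y)
     = (\<Sum>y\<in>UNIV. (ln (L w) + 1) * (q y * L y * kappa P y w) - q y * L y * ln (L y) * kappa P y w
         + (if y = w then 0 else G y))"
    by (simp add: sum_distrib_left sum.distrib sum_subtractf)
  also have "\<dots> = (\<Sum>y\<in>UNIV. L w * (q y * kappa P y w))"
    by (intro sum.cong refl) (auto simp: G_def field_simps)
  also have "\<dots> = 0"
    using invariant_sum_kappa[OF inv, of w] by (simp add: sum_distrib_left[symmetric])
  finally show ?thesis unfolding remainder by simp
qed

context ctmc
begin

definition rel_density :: "real \<Rightarrow> 's \<Rightarrow> real" where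
  "rel_density v z = (\<Sum>m\<in>UNIV. mu m * trans_fun P v m z) / q z"

lemma ell_eq_rel_density: "0 \<le> v \<Longrightarrow> ell M X q v w = rel_density v w"
  unfolding ell_def rel_density_def using prob_X_event by simp

lemma q_mult_rel_density: "q z * rel_density v z = (\<Sum>m\<in>UNIV. mu m * trans_fun P v m z)"
  using q_pos[of z] unfolding rel_density_def by simp

lemma rel_density_pos: "0 \<le> v \<Longrightarrow> 0 < rel_density v z"
proof -
  assume v: "0 \<le> v"
  have "mu z * trans_fun P v z z \<le> (\<Sum>m\<in>UNIV. mu m * trans_fun P v m z)"
    by (rule member_le_sum) (auto intro!: mult_nonneg_nonneg trans_fun_nonneg v less_imp_le[OF mu_pos])
  moreover have "0 < mu z * trans_fun P v z z"
    using mu_pos[of z] trans_fun_diag_ge[OF v, of z] by (metis exp_gt_zero less_le_trans mult_pos_pos)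
  ultimately show ?thesis unfolding rel_density_def using q_pos[of z] by simp
qed

lemma rel_density_deriv:
  "((\<lambda>v. rel_density v z) has_real_derivative
     (\<Sum>y\<in>UNIV. q y * rel_density v y * kappa P y z) / q z) (at v)"
proof -
  have "((\<lambda>v. \<Sum>m\<in>UNIV. mu m * trans_fun P v m z) has_real_derivative
      (\<Sum>m\<in>UNIV. mu m * (\<Sum>y\<in>UNIV. trans_fun P v m y * kappa P y z))) (at v)"
    by (intro DERIV_sum DERIV_cmult trans_fun_forward_deriv)
  moreover have "(\<Sum>m\<in>UNIV. mu m * (\<Sum>y\<in>UNIV. trans_fun P v m y * kappa P y z))
      = (\<Sum>y\<in>UNIV. q y * rel_density v y * kappa P y z)"
    unfolding q_mult_rel_density sum_distrib_left sum_distrib_right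
    by (subst sum.swap) (simp add: mult_ac)
  ultimately show ?thesis unfolding rel_density_def by (auto intro: DERIV_cdivide)
qed

definition entropy_density :: "real \<Rightarrow> 's \<Rightarrow> real" where
  "entropy_density v z = q z * rel_density v z * ln (rel_density v z)"

text \<open>Up to the marginal law, these are the expectations of \<open>\<ell> ln \<ell>\<close> and \<open>\<Lambda>\<^sup>\<bbbQ>\<close> at time
  \<open>v\<close> given \<open>X(b) = x\<close>.\<close>
definition entropy_flow :: "real \<Rightarrow> 's \<Rightarrow> real \<Rightarrow> real" where
  "entropy_flow b x v = (\<Sum>z\<in>UNIV. entropy_density v z * trans_fun P (b - v) z x)"

definition entropy_dissipation :: "real \<Rightarrow> 's \<Rightarrow> real \<Rightarrow> real" where
  "entropy_dissipation b x v = (\<Sum>w\<in>UNIV. q w * LambdaQ P q rel_density v w * trans_fun P (b - v) w x)"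

lemma entropy_density_deriv:
  assumes v: "0 \<le> v"
  shows "((\<lambda>v. entropy_density v z) has_real_derivative
     (\<Sum>y\<in>UNIV. q y * rel_density v y * kappa P y z) * (ln (rel_density v z) + 1)) (at v)"
proof -
  let ?D = "(\<Sum>y\<in>UNIV. q y * rel_density v y * kappa P y z) / q z"
  have "((\<lambda>v. q z * (rel_density v z * ln (rel_density v z))) has_real_derivative
      q z * (?D * ln (rel_density v z) + (1 / rel_density v z * ?D) * rel_density v z)) (at v)"
    by (intro DERIV_cmult DERIV_mult rel_density_deriv
        DERIV_chain'[OF rel_density_deriv DERIV_ln_divide[OF rel_density_pos[OF v]]])
  moreover have "q z * (?D * ln (rel_density v z) + (1 / rel_density v z * ?D) * rel_density v z)
      = (\<Sum>y\<in>UNIV. q y * rel_density v y * kappa P y z) * (ln (rel_density v z) + 1)"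
    using q_pos[of z] rel_density_pos[OF v, of z] by (simp add: field_simps)
  ultimately show ?thesis unfolding entropy_density_def by (simp add: mult.assoc)
qed

lemma trans_fun_reversed_deriv:
  "((\<lambda>v. trans_fun P (b - v) z x) has_real_derivative
     - (\<Sum>w\<in>UNIV. kappa P z w * trans_fun P (b - v) w x)) (at v)"
proof -
  have "((\<lambda>v. b - v) has_real_derivative -1) (at v)"
    by (auto intro!: derivative_eq_intros)
  from DERIV_chain'[OF this trans_fun_backward_deriv] show ?thesis by simp
qed

lemma entropy_flow_deriv:
  assumes v: "0 \<le> v"
  shows "((\<lambda>v. entropy_flow b x v) has_real_derivative - entropy_dissipation b x v) (at v)"
proof -
  let ?p = "\<lambda>w. trans_fun P (b - v) w x"
  let ?D = "\<lambda>z. \<Sum>y\<in>UNIV. q y * rel_density v y * kappa P y z"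
  have "((\<lambda>v. entropy_flow b x v) has_real_derivative
     (\<Sum>z\<in>UNIV. ?D z * (ln (rel_density v z) + 1) * ?p z
        + (- (\<Sum>w\<in>UNIV. kappa P z w * ?p w)) * entropy_density v z)) (at v)"
    unfolding entropy_flow_def
      by (intro DERIV_sum DERIV_mult entropy_density_deriv v trans_fun_reversed_deriv)
  moreover have "(\<Sum>z\<in>UNIV. ?D z * (ln (rel_density v z) + 1) * ?p z
        + (- (\<Sum>w\<in>UNIV. kappa P z w * ?p w)) * entropy_density v z)
      = (\<Sum>w\<in>UNIV. ?p w * ((ln (rel_density v w) + 1) * ?D w
          - (\<Sum>z\<in>UNIV. entropy_density v z * kappa P z w)))"
    by (simp add: sum.distrib sum_subtractf sum_distrib_left sum_distrib_right right_diff_distrib mult_ac)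
       (subst sum.swap, simp add: sum_distrib_left mult_ac)
  moreover have "(ln (rel_density v w) + 1) * ?D w - (\<Sum>z\<in>UNIV. entropy_density v z * kappa P z w)
      = - (q w * LambdaQ P q rel_density v w)" for w
    using entropy_production_identity[OF invariant _ rel_density_pos[OF v], of w] q_pos[of w]
    unfolding entropy_density_def LambdaQ_def LambdaP_def by simp
  ultimately show ?thesis unfolding entropy_dissipation_def by (simp add: sum_negf mult_ac)
qed

lemma continuous_on_rel_density: "continuous_on S (\<lambda>v. rel_density v z)"
  by (rule continuous_at_imp_continuous_on) (auto intro: DERIV_isCont[OF rel_density_deriv])

lemma continuous_on_trans_fun_reversed: "continuous_on S (\<lambda>v. trans_fun P (b - v) z x)"
  by (rule continuous_at_imp_continuous_on) (auto intro: DERIV_isCont[OF trans_fun_reversed_deriv])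

lemma continuous_on_LambdaP:
  assumes "\<forall>v\<in>S. 0 \<le> v"
  shows "continuous_on S (\<lambda>v. LambdaP P q rel_density v w)"
proof -
  have "\<forall>v\<in>S. rel_density v y \<noteq> 0" for y
    using assms rel_density_pos by (metis less_irrefl)
  then show ?thesis unfolding LambdaP_def Psi_def
    by (intro continuous_intros continuous_on_rel_density) auto
qed

lemma continuous_on_LambdaQ:
  "\<forall>v\<in>S. 0 \<le> v \<Longrightarrow> continuous_on S (\<lambda>v. LambdaQ P q rel_density v w)"
  unfolding LambdaQ_def by (intro continuous_intros continuous_on_rel_density continuous_on_LambdaP)

lemma continuous_on_entropy_dissipation:
  "\<forall>v\<in>S. 0 \<le> v \<Longrightarrow> continuous_on S (\<lambda>v. entropy_dissipation b x v)"
  unfolding entropy_dissipation_def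
  by (intro continuous_intros continuous_on_LambdaQ continuous_on_trans_fun_reversed)

end

section \<open>Laws of the chain with arbitrary initial distribution\<close>

lemma indicator_mult_eq_sum_indicator:
  fixes F :: "'s::finite \<Rightarrow> real" and f g :: "'w \<Rightarrow> 's"
  assumes "\<omega> \<in> \<Omega>"
  shows "indicator {\<omega>\<in>\<Omega>. Q \<omega>} \<omega> * F (f \<omega>)
    = (\<Sum>z\<in>UNIV. \<Sum>x\<in>UNIV. F z * indicator {\<omega>\<in>\<Omega>. f \<omega> = z \<and> g \<omega> = x \<and> Q \<omega>} \<omega>)"
proof -
  let ?I = "indicator {\<omega>\<in>\<Omega>. Q \<omega>} \<omega> :: real"
  have "(\<Sum>z\<in>UNIV. \<Sum>x\<in>UNIV. F z * indicator {\<omega>\<in>\<Omega>. f \<omega> = z \<and> g \<omega> = x \<and> Q \<omega>} \<omega>)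
      = (\<Sum>z\<in>UNIV. \<Sum>x\<in>UNIV. if z = f \<omega> then (if x = g \<omega> then F z * ?I else 0) else 0)"
    using assms by (intro sum.cong refl) (auto simp: indicator_def)
  also have "\<dots> = (\<Sum>z\<in>UNIV. if z = f \<omega> then F z * ?I else 0)"
    by (intro sum.cong refl) simp
  also have "\<dots> = F (f \<omega>) * ?I" by simp
  finally show ?thesis by simp
qed

text \<open>\<open>\<nu>\<close> is any probability measure under which \<open>X\<close> has the dynamics of \<open>M\<close> but initial
  law \<open>\<nu>\<^sub>0\<close>; both \<open>M\<close> itself and \<open>\<bbbQ>\<close> are instances.\<close>
locale ctmc_law = ctmc M P q mu Z N
  for M :: "'w measure" and P :: "'s::finite \<Rightarrow> 's \<Rightarrow> real" and q mu Z N +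
  fixes nu :: "'w measure" and nu0 :: "'s \<Rightarrow> real"
  assumes prob_space_nu: "prob_space nu" and sets_nu: "sets nu = sets M"
    and measure_nu_cyl: "\<And>m tx. sorted (0 # map fst tx) \<Longrightarrow>
      measure nu (cyl m tx) = nu0 m * trans_prod (trans_fun P) 0 m tx"
begin
sublocale nu: prob_space nu by (rule prob_space_nu)

lemma nu_space: "space nu = space M" using sets_nu by (rule sets_eq_imp_space_eq)

lemma measure_X_cyl: assumes "sorted (0 # map fst tx)"
  shows "measure nu {\<omega>\<in>space M. \<forall>p\<in>set tx. X (fst p) \<omega> = snd p}
      = (\<Sum>m\<in>UNIV. nu0 m * trans_prod (trans_fun P) 0 m tx)"
proof -
  have "measure nu (\<Union>m\<in>UNIV. cyl m tx) = (\<Sum>m\<in>UNIV. measure nu (cyl m tx))"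
    by (rule measure_finite_Union)
       (auto simp: sets_nu disjoint_family_on_def cyl_def nu.emeasure_finite)
  then show ?thesis unfolding X_cyl_eq_Union_cyl using measure_nu_cyl[OF assms] by simp
qed

definition marginal :: "real \<Rightarrow> 's \<Rightarrow> real" where
  "marginal v w = measure nu {\<omega>\<in>space M. X v \<omega> = w}"

lemma marginal_eq: "0 \<le> v \<Longrightarrow> marginal v w = (\<Sum>m\<in>UNIV. nu0 m * trans_fun P v m w)"
proof -
  assume v: "0 \<le> v"
  have "{\<omega>\<in>space M. X v \<omega> = w} = {\<omega>\<in>space M. \<forall>p\<in>set [(v,w)]. X (fst p) \<omega> = snd p}" by simp
  then show ?thesis unfolding marginal_def using measure_X_cyl[of "[(v,w)]"] v by simp
qed

lemma measure_X_cyl_factor: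
  assumes S: "finite S" and Sb: "\<forall>p\<in>S. b \<le> fst p"
  obtains c where "\<And>v z x. 0 \<le> v \<Longrightarrow> v \<le> b \<Longrightarrow>
     measure nu {\<omega>\<in>space M. X v \<omega> = z \<and> X b \<omega> = x \<and> (\<forall>p\<in>S. X (fst p) \<omega> = snd p)} = marginal v z * trans_fun P (b - v) z x * c x"
proof -
  obtain L0 where L0: "set L0 = S" using finite_list[OF S] by blast
  define L where "L = sort_key fst L0"
  have sL: "set L = S" unfolding L_def using L0 by simp
  have stL: "sorted (map fst L)" unfolding L_def by simp
  define c where "c x = trans_prod (trans_fun P) b x L" for x
  show ?thesis
  proof (rule that[of c])
    fix v z x assume v: "0 \<le> v" "v \<le> b"
    define tx where "tx = (v,z)#(b,x)#L"
    have st: "sorted (0 # map fst tx)" unfolding tx_def using v stL Sb sL by auto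
    have e: "{\<omega>\<in>space M. X v \<omega> = z \<and> X b \<omega> = x \<and> (\<forall>p\<in>S. X (fst p) \<omega> = snd p)}
        = {\<omega>\<in>space M. \<forall>p\<in>set tx. X (fst p) \<omega> = snd p}" unfolding tx_def sL[symmetric] by auto
    have "(\<Sum>m\<in>UNIV. nu0 m * trans_prod (trans_fun P) 0 m tx)
        = (\<Sum>m\<in>UNIV. nu0 m * trans_fun P v m z) * trans_fun P (b - v) z x * c x"
      unfolding tx_def c_def by (simp add: sum_distrib_left sum_distrib_right mult_ac)
    then show "measure nu {\<omega>\<in>space M. X v \<omega> = z \<and> X b \<omega> = x \<and> (\<forall>p\<in>S. X (fst p) \<omega> = snd p)}
        = marginal v z * trans_fun P (b - v) z x * c x"
      unfolding e measure_X_cyl[OF st] marginal_eq[OF v(1)] by simp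
  qed
qed

lemma integral_X_cyl_factor:
  assumes S: "finite S" and Sb: "\<forall>p\<in>S. b \<le> fst p"
    and c: "\<And>v z x. 0 \<le> v \<Longrightarrow> v \<le> b \<Longrightarrow>
     measure nu {\<omega>\<in>space M. X v \<omega> = z \<and> X b \<omega> = x \<and> (\<forall>p\<in>S. X (fst p) \<omega> = snd p)} = marginal v z * trans_fun P (b - v) z x * c x"
    and v: "0 \<le> v" "v \<le> b"
  shows "(\<integral>\<omega>. indicator {\<omega>\<in>space M. \<forall>p\<in>S. X (fst p) \<omega> = snd p} \<omega> * F (X v \<omega>) \<partial>nu)
       = (\<Sum>x\<in>UNIV. c x * (\<Sum>z\<in>UNIV. marginal v z * F z * trans_fun P (b - v) z x))"
proof -
  let ?E = "\<lambda>z x. {\<omega>\<in>space M. X v \<omega> = z \<and> X b \<omega> = x \<and> (\<forall>p\<in>S. X (fst p) \<omega> = snd p)}"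
  have Es: "?E z x \<in> sets nu" for z x
  proof -
    have "?E z x = {\<omega>\<in>space M. X v \<omega> = z} \<inter> {\<omega>\<in>space M. X b \<omega> = x} \<inter> {\<omega>\<in>space M. \<forall>p\<in>S. X (fst p) \<omega>
        = snd p}"
      by auto
    then show ?thesis unfolding sets_nu using S by (auto intro!: sets.Int)
  qed
  have pt: "indicator {\<omega>\<in>space M. \<forall>p\<in>S. X (fst p) \<omega> = snd p} \<omega> * F (X v \<omega>)
      = (\<Sum>z\<in>UNIV. \<Sum>x\<in>UNIV. F z * indicator (?E z x) \<omega>)" if "\<omega> \<in> space nu" for \<omega>
    by (rule indicator_mult_eq_sum_indicator) (use that nu_space in simp)
  have "(\<integral>\<omega>. indicator {\<omega>\<in>space M. \<forall>p\<in>S. X (fst p) \<omega> = snd p} \<omega> * F (X v \<omega>) \<partial>nu)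
      = (\<integral>\<omega>. (\<Sum>z\<in>UNIV. \<Sum>x\<in>UNIV. F z * indicator (?E z x) \<omega>) \<partial>nu)"
    by (rule Bochner_Integration.integral_cong[OF refl pt])
  also have "\<dots> = (\<Sum>z\<in>UNIV. \<Sum>x\<in>UNIV. F z * measure nu (?E z x))"
  proof -
    have ii: "integrable nu (\<lambda>\<omega>. indicator (?E z x) \<omega> :: real)" for z x
      by (intro integrable_real_indicator Es) (simp add: less_top[symmetric] nu.emeasure_finite)
    have mi: "(\<integral>\<omega>. indicator (?E z x) \<omega> \<partial>nu) = measure nu (?E z x)" for z x
      using sets.sets_into_space[OF Es[of z x]] by (simp add: Int_absorb2)
    have "(\<integral>\<omega>. (\<Sum>z\<in>UNIV. \<Sum>x\<in>UNIV. F z * indicator (?E z x) \<omega>) \<partial>nu)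
        = (\<Sum>z\<in>UNIV. \<integral>\<omega>. (\<Sum>x\<in>UNIV. F z * indicator (?E z x) \<omega>) \<partial>nu)"
      by (rule Bochner_Integration.integral_sum) (intro Bochner_Integration.integrable_sum integrable_mult_right ii)
    also have "\<dots> = (\<Sum>z\<in>UNIV. \<Sum>x\<in>UNIV. \<integral>\<omega>. F z * indicator (?E z x) \<omega> \<partial>nu)"
      by (intro sum.cong refl Bochner_Integration.integral_sum integrable_mult_right ii)
    also have "\<dots> = (\<Sum>z\<in>UNIV. \<Sum>x\<in>UNIV. F z * measure nu (?E z x))"
      by (simp only: integral_mult_right_zero mi)
    finally show ?thesis .
  qed
  also have "\<dots> = (\<Sum>z\<in>UNIV. \<Sum>x\<in>UNIV. F z * (marginal v z * trans_fun P (b - v) z x * c x))"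
    using c[OF v] by simp
  also have "\<dots> = (\<Sum>x\<in>UNIV. c x * (\<Sum>z\<in>UNIV. marginal v z * F z * trans_fun P (b - v) z x))"
    by (subst sum.swap) (simp add: sum_distrib_left mult_ac)
  finally show ?thesis .
qed

end

section \<open>Joint measurability of the drift along the reversed path\<close>

definition dyadic_approx :: "real \<Rightarrow> nat \<Rightarrow> real \<Rightarrow> real" where
  "dyadic_approx r n u = max 0 (min r (real_of_int \<lfloor>u * 2^n\<rfloor> / 2^n))"

lemma dyadic_approx_bounds: assumes "0 \<le> u" "u \<le> r"
  shows "dyadic_approx r n u \<le> u" "u - 1 / 2^n < dyadic_approx r n u" "0
      \<le> dyadic_approx r n u" "dyadic_approx r n u \<le> r"
proof -
  have f1: "real_of_int \<lfloor>u * 2^n\<rfloor> \<le> u * 2^n" by simp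
  have f2: "u * 2^n - 1 < real_of_int \<lfloor>u * 2^n\<rfloor>" by (rule real_of_int_floor_gt_diff_one)
  have f0: "0 \<le> real_of_int \<lfloor>u * 2^n\<rfloor>" using assms by simp
  have p: "(0::real) < 2^n" by simp
  have a1: "real_of_int \<lfloor>u * 2^n\<rfloor> / 2^n \<le> u" using f1 p by (simp add: divide_le_eq)
  have "(u * 2^n - 1) / 2^n < real_of_int \<lfloor>u * 2^n\<rfloor> / 2^n" by (rule divide_strict_right_mono[OF f2 p])
  moreover have "(u * 2^n - 1) / 2^n = u - 1 / 2^n" by (simp add: diff_divide_distrib)
  ultimately have a2: "u - 1 / 2^n < real_of_int \<lfloor>u * 2^n\<rfloor> / 2^n" by simp
  have a0: "0 \<le> real_of_int \<lfloor>u * 2^n\<rfloor> / 2^n" using f0 by simp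
  have e: "dyadic_approx r n u = real_of_int \<lfloor>u * 2^n\<rfloor> / 2^n" unfolding dyadic_approx_def
    using a0 a1 assms by simp
  show "dyadic_approx r n u \<le> u" "u - 1 / 2^n < dyadic_approx r n u" "0
      \<le> dyadic_approx r n u" "dyadic_approx r n u \<le> r"
    using a0 a1 a2 assms unfolding e by auto
qed

context ctmc
begin

lemma N_right_locally_const: assumes w: "\<omega> \<in> space M" and t0: "0 \<le> t0"
  shows "\<exists>b>t0. \<forall>s. t0 \<le> s \<and> s < b \<longrightarrow> N s \<omega> = N t0 \<omega>"
proof -
  have "continuous (at_right t0) (\<lambda>s. real (N s \<omega>))" using poisson w t0
    unfolding poisson_process1_def by auto
  then have "((\<lambda>s. real (N s \<omega>)) \<longlongrightarrow> real (N t0 \<omega>)) (at_right t0)"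
    by (simp add: continuous_within)
  then have "eventually (\<lambda>s. dist (real (N s \<omega>)) (real (N t0 \<omega>)) < 1/2) (at_right t0)"
    by (rule tendstoD) simp
  then obtain b where b: "b > t0" "\<forall>y>t0. y < b \<longrightarrow> dist (real (N y \<omega>)) (real (N t0 \<omega>)) < 1/2"
    using eventually_at_right[of t0 "t0 + 1"] by auto
  show ?thesis
  proof (intro exI[of _ b] conjI allI impI)
    show "t0 < b" by fact
    fix s assume s: "t0 \<le> s \<and> s < b"
    show "N s \<omega> = N t0 \<omega>"
    proof (cases "s = t0")
      case False
      then have "dist (real (N s \<omega>)) (real (N t0 \<omega>)) < 1/2" using b s by auto
      then have d: "\<bar>real (N s \<omega>) - real (N t0 \<omega>)\<bar> < 1" by (simp add: dist_real_def)
      show ?thesis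
      proof (rule ccontr)
        assume ne: "N s \<omega> \<noteq> N t0 \<omega>"
        then have "N s \<omega> + 1 \<le> N t0 \<omega> \<or> N t0 \<omega> + 1 \<le> N s \<omega>" by arith
        then have "real (N s \<omega>) + 1 \<le> real (N t0 \<omega>) \<or> real (N t0 \<omega>) + 1 \<le> real (N s \<omega>)"
          by (metis of_nat_1 of_nat_add of_nat_le_iff)
        then show False using d by linarith
      qed
    qed simp
  qed
qed

lemma X_dyadic_approx_eventually: assumes w: "\<omega> \<in> space M" and u: "0 \<le> u" "u \<le> r" and rT: "r \<le> T"
  shows "eventually (\<lambda>n. X (T - dyadic_approx r n u) \<omega> = X (T - u) \<omega>) sequentially"
proof -
  have tu: "0 \<le> T - u" using u rT by linarith
  obtain b where b: "b > T - u" "\<forall>s. T - u \<le> s \<and> s < b \<longrightarrow> N s \<omega> = N (T - u) \<omega>"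
    using N_right_locally_const[OF w tu] by blast
  have "\<exists>n. (1/2::real)^n < b - (T - u)" using b(1) by (intro real_arch_pow_inv) simp_all
  then obtain n0 where n0: "(1/2::real)^n0 < b - (T - u)" by blast
  show ?thesis
  proof (rule eventually_sequentiallyI[of n0])
    fix n assume n: "n0 \<le> n"
    have "(1/2::real)^n \<le> (1/2)^n0" by (rule power_decreasing[OF n]) simp_all
    then have "(1/2::real)^n < b - (T - u)" using n0 by linarith
    then have h: "1 / 2^n < b - (T - u)" by (simp add: power_one_over)
    have c1: "dyadic_approx r n u \<le> u" and c2: "u - 1 / 2^n < dyadic_approx r n u"
      using dyadic_approx_bounds[OF u] by auto
    have "T - u \<le> T - dyadic_approx r n u \<and> T - dyadic_approx r n u < b" using h c1 c2 by linarith
    then have "N (T - dyadic_approx r n u) \<omega> = N (T - u) \<omega>" using b(2) by blast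
    then show "X (T - dyadic_approx r n u) \<omega> = X (T - u) \<omega>" unfolding ctchain_def by simp
  qed
qed

lemma X_measurable_subalgebra: assumes spF: "space F = space M"
  and ev: "\<And>y. {\<omega>\<in>space M. X t \<omega> = y} \<in> sets F"
  shows "X t \<in> measurable F (count_space UNIV)"
proof -
  have "X t -` {y} \<inter> space F \<in> sets F" for y
  proof -
    have "X t -` {y} \<inter> space F = {\<omega>\<in>space M. X t \<omega> = y}" using spF by auto
    then show ?thesis using ev by simp
  qed
  then show ?thesis unfolding measurable_count_space_eq2_countable by auto
qed

lemma measurable_X_dyadic_approx:
  fixes F :: "'w measure"
  assumes spF: "space F = space M" and evF: "\<And>u y. 0 \<le> u \<Longrightarrow> u \<le> r \<Longrightarrow> {\<omega>\<in>space M. X (T - u) \<omega> = y} \<in> sets F"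
    and r0: "0 \<le> r"
  shows "(\<lambda>p. X (T - dyadic_approx r n (snd p)) (fst p)) \<in> measurable (F \<Otimes>\<^sub>M lborel) (count_space UNIV)"
proof -
  have fl: "(\<lambda>p::'w \<times> real. \<lfloor>snd p * 2^n\<rfloor>) \<in> measurable (F \<Otimes>\<^sub>M lborel) (count_space UNIV)"
  proof -
    have "(\<lambda>p::'w \<times> real. snd p * 2^n) \<in> borel_measurable (F \<Otimes>\<^sub>M lborel)" by measurable
    then show ?thesis by (rule measurable_compose[OF _ measurable_real_floor])
  qed
  have Xi: "(\<lambda>p. X (T - max 0 (min r (real_of_int i / 2^n))) (fst p)) \<in> measurable (F \<Otimes>\<^sub>M lborel) (count_space UNIV)" for i :: int
  proof -
    have "X (T - max 0 (min r (real_of_int i / 2^n))) \<in> measurable F (count_space UNIV)"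
      using r0 by (intro X_measurable_subalgebra spF evF) auto
    then show ?thesis by (rule measurable_compose[OF measurable_fst])
  qed
  show ?thesis
    unfolding dyadic_approx_def
    by (rule measurable_compose_countable'[where g="\<lambda>p. \<lfloor>snd p * 2^n\<rfloor>" and I=UNIV, OF Xi fl]) auto
qed

text \<open>\<open>T - u\<close> is approached from the right by \<open>T - dyadic_approx r n u\<close>, along which
  \<open>X\<close> is eventually constant by right-continuity of \<open>N\<close>; each approximant is measurable
  because it only takes countably many time values.\<close>
lemma measurable_reversed_path:
  fixes F :: "'w measure" and Lam :: "real \<Rightarrow> 's \<Rightarrow> real"
  assumes spF: "space F = space M" and evF: "\<And>u y. 0 \<le> u \<Longrightarrow> u \<le> r \<Longrightarrow> {\<omega>\<in>space M. X (T - u) \<omega> = y} \<in> sets F"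
    and rT: "r \<le> T" and r0: "0 \<le> r" and cont: "\<And>w. continuous_on {0..r} (\<lambda>u. Lam u w)"
  shows "(\<lambda>p. indicator {0..r} (snd p) * Lam (snd p) (X (T - snd p) (fst p))) \<in> borel_measurable (F \<Otimes>\<^sub>M lborel)"
proof (rule borel_measurable_LIMSEQ_real)
  let ?A = "\<lambda>n p. indicator {0..r} (snd p) * Lam (snd p) (X (T - dyadic_approx r n (snd p)) (fst p))"
  show "?A n \<in> borel_measurable (F \<Otimes>\<^sub>M lborel)" for n
  proof -
    have Xc: "(\<lambda>p. X (T - dyadic_approx r n (snd p)) (fst p)) \<in> measurable (F \<Otimes>\<^sub>M lborel) (count_space UNIV)"
      using spF evF r0 by (rule measurable_X_dyadic_approx)
    have Lw: "(\<lambda>p. indicator {0..r} (snd p) * Lam (snd p) w) \<in> borel_measurable (F \<Otimes>\<^sub>M lborel)" for w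
    proof -
      have "(\<lambda>u. indicator {0..r} u *\<^sub>R Lam u w) \<in> borel_measurable borel"
        by (rule borel_measurable_continuous_on_indicator[OF _ cont]) simp
      then have "(\<lambda>u. indicator {0..r} u * Lam u w) \<in> borel_measurable lborel" by simp
      then show ?thesis by (rule measurable_compose[OF measurable_snd])
    qed
    show ?thesis
      by (rule measurable_compose_countable'[where f="\<lambda>w p. indicator {0..r} (snd p) * Lam (snd p) w"
            and g="\<lambda>p. X (T - dyadic_approx r n (snd p)) (fst p)" and I=UNIV, OF Lw Xc]) auto
  qed
  fix p :: "'w \<times> real" assume p: "p \<in> space (F \<Otimes>\<^sub>M lborel)"
  obtain \<omega> u where pe: "p = (\<omega>, u)" by (cases p)
  have w: "\<omega> \<in> space M" using p spF unfolding pe by (simp add: space_pair_measure)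
  show "(\<lambda>n. ?A n p) \<longlonglongrightarrow> indicator {0..r} (snd p) * Lam (snd p) (X (T - snd p) (fst p))"
  proof (cases "u \<in> {0..r}")
    case True
    have "eventually (\<lambda>n. ?A n p = indicator {0..r} (snd p) * Lam (snd p) (X (T - snd p) (fst p))) sequentially"
      using X_dyadic_approx_eventually[OF w _ _ rT, of u] True unfolding pe
        by (auto elim!: eventually_mono)
    then show ?thesis by (rule tendsto_eventually)
  next
    case False
    then show ?thesis unfolding pe by simp
  qed
qed

end

section \<open>A martingale criterion for the reversed chain\<close>

lemma set_integral_sum_mult:
  fixes c :: "'i \<Rightarrow> real" and K :: "'i \<Rightarrow> real \<Rightarrow> real" and I :: "'i set"
  assumes "\<And>x. set_integrable lborel A (K x)"
  shows "(LINT u:A|lborel. (\<Sum>x\<in>I. c x * K x u)) = (\<Sum>x\<in>I. c x * (LINT u:A|lborel. K x u))"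
proof -
  have "(LINT u:A|lborel. (\<Sum>x\<in>I. c x * K x u)) = (\<integral>u. (\<Sum>x\<in>I. c x * (indicator A u *\<^sub>R K x u)) \<partial>lborel)"
    unfolding set_lebesgue_integral_def
    by (intro Bochner_Integration.integral_cong refl) (simp add: sum_distrib_left mult_ac)
  also have "\<dots> = (\<Sum>x\<in>I. \<integral>u. c x * (indicator A u *\<^sub>R K x u) \<partial>lborel)"
    by (rule Bochner_Integration.integral_sum)
      (rule integrable_mult_right, rule assms[unfolded set_integrable_def])
  also have "\<dots> = (\<Sum>x\<in>I. c x * (LINT u:A|lborel. K x u))"
    unfolding set_lebesgue_integral_def by simp
  finally show ?thesis .
qed

lemma (in prob_space) integrable_pair_lborel_bounded:
  fixes h :: "'a \<times> real \<Rightarrow> real"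
  assumes h: "h \<in> borel_measurable (M \<Otimes>\<^sub>M lborel)"
    and bound: "\<And>\<omega> u. \<omega> \<in> space M \<Longrightarrow> \<bar>h (\<omega>, u)\<bar> \<le> indicator {s<..t} u * B"
    and st: "s \<le> t"
  shows "integrable (M \<Otimes>\<^sub>M lborel) h"
proof -
  interpret p: pair_sigma_finite M lborel
    by (intro pair_sigma_finite.intro sigma_finite_measure_axioms lborel.sigma_finite_measure_axioms)
  have iB: "integrable lborel (\<lambda>u. indicator {s<..t} u * B)"
    by (intro integrable_mult_left integrable_real_indicator) (use st in auto)
  have section_integrable: "integrable lborel (\<lambda>u. h (\<omega>, u))" if w: "\<omega> \<in> space M" for \<omega>
  proof (rule Bochner_Integration.integrable_bound[OF iB])
    show "(\<lambda>u. h (\<omega>, u)) \<in> borel_measurable lborel"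
      using measurable_compose[OF measurable_Pair1'[OF w] h] by simp
    show "AE u in lborel. norm (h (\<omega>, u)) \<le> norm (indicator {s<..t} u * B)"
      using bound[OF w] by (intro AE_I2) (auto intro: order_trans[OF _ abs_ge_self])
  qed
  have "integrable M (\<lambda>\<omega>. \<integral>u. norm (h (\<omega>, u)) \<partial>lborel)"
  proof (rule integrable_const_bound[where B="B * (t - s)"])
    have "case_prod (\<lambda>\<omega> u. norm (h (\<omega>, u))) \<in> borel_measurable (M \<Otimes>\<^sub>M lborel)"
      using measurable_compose[OF h borel_measurable_norm] by (simp add: case_prod_beta')
    then show "(\<lambda>\<omega>. \<integral>u. norm (h (\<omega>, u)) \<partial>lborel) \<in> borel_measurable M"
      by (rule lborel.borel_measurable_lebesgue_integral)
    show "AE \<omega> in M. norm (\<integral>u. norm (h (\<omega>, u)) \<partial>lborel) \<le> B * (t - s)"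
    proof (rule AE_I2)
      fix \<omega> assume w: "\<omega> \<in> space M"
      have "(\<integral>u. norm (h (\<omega>, u)) \<partial>lborel) \<le> (\<integral>u. indicator {s<..t} u * B \<partial>lborel)"
        by (rule integral_mono[OF integrable_norm[OF section_integrable[OF w]] iB])
          (use bound[OF w] in simp)
      also have "\<dots> = B * (t - s)" using st by (simp add: measure_def)
      finally show "norm (\<integral>u. norm (h (\<omega>, u)) \<partial>lborel) \<le> B * (t - s)" by simp
    qed
  qed
  then show ?thesis
    by (rule p.Fubini_integrable[OF h]) (rule AE_I2, rule section_integrable)
qed

lemma integral_indicator_eq_0_sigma_sets:
  fixes D :: "'a \<Rightarrow> real"
  assumes E: "E \<subseteq> sets M" "Int_stable E" and A: "A \<in> sigma_sets (space M) E"
    and space: "space M \<in> E" and D: "integrable M D"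
    and zero: "\<And>B. B \<in> E \<Longrightarrow> (\<integral>\<omega>. indicator B \<omega> * D \<omega> \<partial>M) = 0"
  shows "(\<integral>\<omega>. indicator A \<omega> * D \<omega> \<partial>M) = 0"
proof -
  have "E \<subseteq> Pow (space M)" using E(1) sets.sets_into_space by blast
  from E(2) this A show ?thesis
proof (induction rule: sigma_sets_induct_disjoint)
  case (basic B)
  then show ?case by (rule zero)
next
  case empty
  then show ?case by simp
next
  case (compl B)
  have "B \<in> sets M" using sets.sigma_sets_subset[OF E(1)] compl(1) by blast
  then have "(\<integral>\<omega>. indicator (space M - B) \<omega> * D \<omega> \<partial>M)
      = (\<integral>\<omega>. indicator (space M) \<omega> * D \<omega> - indicator B \<omega> * D \<omega> \<partial>M)"
    using sets.sets_into_space
      by (intro Bochner_Integration.integral_cong refl) (auto simp: indicator_def)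
  also have "\<dots> = (\<integral>\<omega>. indicator (space M) \<omega> * D \<omega> \<partial>M) - (\<integral>\<omega>. indicator B \<omega> * D \<omega> \<partial>M)"
    using integrable_mult_indicator[OF _ D, of "space M"] integrable_mult_indicator[OF \<open>B \<in> sets M\<close> D]
    by simp
  finally show ?case using zero[OF space] compl(2) by simp
next
  case (union B)
  have B: "\<And>i. B i \<in> sets M" using union(2) E(1) sets.sigma_sets_subset by blast
  have "set_integrable M (\<Union>i. B i) D"
    unfolding set_integrable_def by (rule integrable_mult_indicator[OF _ D]) (use B in auto)
  then have "(LINT \<omega>:(\<Union>i. B i)|M. D \<omega>) = (\<Sum>i. (LINT \<omega>:(B i)|M. D \<omega>))"
    using union(1) B by (intro lebesgue_integral_countable_add) (auto simp: disjoint_family_on_def)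
  also have "\<dots> = 0" using union(3) unfolding set_lebesgue_integral_def by simp
  finally show ?case unfolding set_lebesgue_integral_def by simp
qed
qed

text \<open>\<open>Y\<close> is the process of the theorem for \<open>\<Phi> = \<ell> ln \<ell>, \<Lambda> = \<Lambda>\<^sup>\<bbbQ>\<close> under \<open>\<bbbQ>\<close> and for
  \<open>\<Phi> = ln \<ell>, \<Lambda> = \<Lambda>\<^sup>\<bbbP>\<close> under \<open>\<bbbP>\<close>; the two cases only differ in how the marginal law is
  split off from \<open>q \<ell> ln \<ell>\<close> and \<open>q \<Lambda>\<^sup>\<bbbQ>\<close>.\<close>
locale reversed_martingale = ctmc_law M P q mu Z N nu nu0
  for M :: "'w measure" and P :: "'s::finite \<Rightarrow> 's \<Rightarrow> real" and q mu Z N nu nu0 +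
  fixes T :: real and Phi Lam :: "real \<Rightarrow> 's \<Rightarrow> real"
  assumes continuous_Lam: "\<And>w. continuous_on {0..T} (\<lambda>v. Lam v w)"
    and marginal_Phi: "\<And>v w. 0 \<le> v \<Longrightarrow> v \<le> T \<Longrightarrow> marginal v w * Phi v w = entropy_density v w"
    and marginal_Lam: "\<And>v w. 0 \<le> v \<Longrightarrow> v \<le> T \<Longrightarrow> marginal v w * Lam v w = q w * LambdaQ P q rel_density v w"
begin

definition past_gens :: "real \<Rightarrow> 'w set set" where
  "past_gens s = {{\<omega>\<in>space M. X (T - u) \<omega> = y} | u y. 0 \<le> u \<and> u \<le> s}"

definition G :: "real \<Rightarrow> 'w measure" where
  "G s = nat_filtration M (\<lambda>s. X (T - s)) s"

definition Y :: "real \<Rightarrow> 'w \<Rightarrow> real" where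
  "Y s \<omega> = Phi (T - s) (X (T - s) \<omega>) - (LINT u:{0..s}|lborel. Lam (T - u) (X (T - u) \<omega>))"

lemma past_gens_Pow: "past_gens s \<subseteq> Pow (space M)" unfolding past_gens_def by auto

lemma G_eq: "G s = sigma (space M) (past_gens s)" unfolding G_def nat_filtration_def past_gens_def ..

lemma space_G: "space (G s) = space M" unfolding G_eq using past_gens_Pow by simp

lemma sets_G: "sets (G s) = sigma_sets (space M) (past_gens s)" unfolding G_eq
  using past_gens_Pow by simp

lemma past_gens_sets: "past_gens s \<subseteq> sets M" unfolding past_gens_def using sets_X_event by auto

lemma sets_G_subset: "sets (G s) \<subseteq> sets M"
  unfolding sets_G by (rule sets.sigma_sets_subset[OF past_gens_sets])

lemma X_event_G: "0 \<le> u \<Longrightarrow> u \<le> s \<Longrightarrow> {\<omega>\<in>space M. X (T - u) \<omega> = y} \<in> sets (G s)"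
  unfolding sets_G past_gens_def by (rule sigma_sets.Basic) auto

lemma sets_G_mono: "s \<le> t \<Longrightarrow> sets (G s) \<subseteq> sets (G t)"
  unfolding sets_G by (rule sigma_sets_subseteq) (auto simp: past_gens_def)

lemma subalgebra_G: "subalgebra nu (G s)"
  unfolding subalgebra_def using space_G nu_space sets_G_subset sets_nu by auto

lemma continuous_on_Lam_reversed: "s \<le> T \<Longrightarrow> continuous_on {0..s} (\<lambda>u. Lam (T - u) w)"
proof -
  assume s: "s \<le> T"
  have "continuous_on {0..s} (\<lambda>u. T - u)" by (intro continuous_intros)
  moreover have "(\<lambda>u. T - u) ` {0..s} \<subseteq> {0..T}" using s by auto
  ultimately show ?thesis using continuous_on_compose2[OF continuous_Lam] by blast
qed

lemma Lam_bounded: obtains B where "0 \<le> B" "\<And>v w. 0 \<le> v \<Longrightarrow> v \<le> T \<Longrightarrow> \<bar>Lam v w\<bar> \<le> B"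
proof -
  have "\<forall>w. \<exists>B. \<forall>v\<in>{0..T}. \<bar>Lam v w\<bar> \<le> B"
  proof
    fix w
    have "compact ((\<lambda>v. Lam v w) ` {0..T})" by (intro compact_continuous_image continuous_Lam) simp
    then have "bounded ((\<lambda>v. Lam v w) ` {0..T})" by (rule compact_imp_bounded)
    then show "\<exists>B. \<forall>v\<in>{0..T}. \<bar>Lam v w\<bar> \<le> B" unfolding bounded_iff by auto
  qed
  then have "\<exists>Bf. \<forall>w. \<forall>v\<in>{0..T}. \<bar>Lam v w\<bar> \<le> Bf w" by (rule choice)
  then obtain Bf where Bf: "\<And>w v. v \<in> {0..T} \<Longrightarrow> \<bar>Lam v w\<bar> \<le> Bf w" by blast
  define B where "B = (\<Sum>w\<in>UNIV. \<bar>Bf w\<bar>)"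
  show ?thesis
  proof (rule that[of B])
    show "0 \<le> B" unfolding B_def by (simp add: sum_nonneg)
    fix v w assume "0 \<le> v" "v \<le> T"
    then have "\<bar>Lam v w\<bar> \<le> \<bar>Bf w\<bar>" using Bf[of v w] by auto
    also have "\<dots> \<le> B" unfolding B_def by (rule member_le_sum) auto
    finally show "\<bar>Lam v w\<bar> \<le> B" .
  qed
qed

lemma measurable_Lam_path_G: assumes "0 \<le> s" "s \<le> T"
  shows "(\<lambda>p. indicator {0..s} (snd p) * Lam (T - snd p) (X (T - snd p) (fst p))) \<in> borel_measurable (G s \<Otimes>\<^sub>M lborel)"
proof -
  have "(\<lambda>p. indicator {0..s} (snd p) * (\<lambda>u w. Lam (T - u) w) (snd p) (X (T - snd p) (fst p))) \<in> borel_measurable (G s \<Otimes>\<^sub>M lborel)"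
    by (rule measurable_reversed_path[where F="G s" and r=s and T=T
      and Lam="\<lambda>u w. Lam (T - u) w", OF space_G X_event_G assms(2) assms(1) continuous_on_Lam_reversed[OF assms(2)]])
  then show ?thesis by simp
qed

lemma measurable_Lam_path_nu: assumes "0 \<le> s" "s \<le> T"
  shows "(\<lambda>p. indicator {0..s} (snd p) * Lam (T - snd p) (X (T - snd p) (fst p))) \<in> borel_measurable (nu \<Otimes>\<^sub>M lborel)"
proof -
  have "(\<lambda>p. indicator {0..s} (snd p) * (\<lambda>u w. Lam (T - u) w) (snd p) (X (T - snd p) (fst p))) \<in> borel_measurable (M \<Otimes>\<^sub>M lborel)"
    by (rule measurable_reversed_path[where F=M and r=s and T=T
      and Lam="\<lambda>u w. Lam (T - u) w", OF refl sets_X_event assms(2) assms(1) continuous_on_Lam_reversed[OF assms(2)]])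
  moreover have "sets (nu \<Otimes>\<^sub>M lborel) = sets (M \<Otimes>\<^sub>M lborel)"
    by (rule sets_pair_measure_cong[OF sets_nu refl])
  ultimately show ?thesis by (subst measurable_cong_sets[OF _ refl]) simp_all
qed

lemma measurable_Lam_path: assumes "0 \<le> s" "s \<le> T" "\<omega> \<in> space M"
  shows "(\<lambda>u. indicator {0..s} u * Lam (T - u) (X (T - u) \<omega>)) \<in> borel_measurable lborel"
proof -
  have "(\<lambda>u. indicator {0..s} (snd (\<omega>, u)) * Lam (T - snd (\<omega>, u)) (X (T - snd (\<omega>, u)) (fst (\<omega>, u)))) \<in> borel_measurable lborel"
    using measurable_compose[OF measurable_Pair1'[of \<omega> "G s" lborel] measurable_Lam_path_G[OF assms(1,2)]] assms(3) space_G by simp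
  then show ?thesis by simp
qed

lemma set_integrable_Lam_path: assumes "0 \<le> s" "s \<le> T" "\<omega> \<in> space M"
  shows "set_integrable lborel {0..s} (\<lambda>u. Lam (T - u) (X (T - u) \<omega>))"
proof -
  obtain B where B: "0 \<le> B" "\<And>v w. 0 \<le> v \<Longrightarrow> v \<le> T \<Longrightarrow> \<bar>Lam v w\<bar> \<le> B" using Lam_bounded by blast
  have "integrable lborel (indicat_real {0..s})"
    by (rule integrable_real_indicator) (auto simp: emeasure_lborel_Icc_eq)
  then have i: "integrable lborel (\<lambda>u. indicator {0..s} u * B)" by (rule integrable_mult_left)
  have ae: "AE u in lborel. norm (indicator {0..s} u * Lam (T - u) (X (T - u) \<omega>))
      \<le> norm (indicator {0..s} u * B)"
    using B assms by (intro AE_I2) (auto simp: indicator_def)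
  have "integrable lborel (\<lambda>u. indicator {0..s} u * Lam (T - u) (X (T - u) \<omega>))"
    by (rule Bochner_Integration.integrable_bound[OF i measurable_Lam_path[OF assms] ae])
  then show ?thesis unfolding set_integrable_def by simp
qed

lemma measurable_Lam_path_integral_G: assumes "0 \<le> s" "s \<le> T"
  shows "(\<lambda>\<omega>. LINT u:{0..s}|lborel. Lam (T - u) (X (T - u) \<omega>)) \<in> borel_measurable (G s)"
proof -
  have "case_prod (\<lambda>\<omega> u. indicator {0..s} u * Lam (T - u) (X (T - u) \<omega>)) \<in> borel_measurable (G s \<Otimes>\<^sub>M lborel)"
    using measurable_Lam_path_G[OF assms] by (simp add: case_prod_beta')
  then have "(\<lambda>\<omega>. \<integral>u. indicator {0..s} u * Lam (T - u) (X (T - u) \<omega>) \<partial>lborel) \<in> borel_measurable (G s)"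
    by (rule lborel.borel_measurable_lebesgue_integral)
  then show ?thesis unfolding set_lebesgue_integral_def by simp
qed

lemma X_measurable_G: assumes "0 \<le> s" "s \<le> T" shows "X (T - s) \<in> measurable (G s) (count_space UNIV)"
  by (rule X_measurable_subalgebra[OF space_G]) (rule X_event_G, use assms in auto)

lemma measurable_Phi_G: assumes "0 \<le> s" "s
    \<le> T" shows "(\<lambda>\<omega>. Phi (T - s) (X (T - s) \<omega>)) \<in> borel_measurable (G s)"
proof -
  have "(\<lambda>x. Phi (T - s) x) \<in> borel_measurable (count_space UNIV)" by simp
  then show ?thesis by (rule measurable_compose[OF X_measurable_G[OF assms]])
qed

lemma measurable_Y_G: assumes "0 \<le> s" "s \<le> T" shows "Y s \<in> borel_measurable (G s)"
  unfolding Y_def[abs_def] by (intro borel_measurable_diff measurable_Phi_G measurable_Lam_path_integral_G assms)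

lemma measurable_Y_nu: assumes "0 \<le> s" "s \<le> T" shows "Y s \<in> borel_measurable nu"
  by (rule measurable_from_subalg[OF subalgebra_G measurable_Y_G[OF assms]])

lemma abs_Lam_path_integral_le: assumes "0 \<le> s" "s \<le> T" "\<omega> \<in> space M"
    and B: "0 \<le> B" "\<And>v w. 0 \<le> v \<Longrightarrow> v \<le> T \<Longrightarrow> \<bar>Lam v w\<bar> \<le> B"
  shows "\<bar>LINT u:{0..s}|lborel. Lam (T - u) (X (T - u) \<omega>)\<bar> \<le> B * s"
proof -
  have si: "set_integrable lborel {0..s} (\<lambda>u. Lam (T - u) (X (T - u) \<omega>))"
    by (rule set_integrable_Lam_path[OF assms(1-3)])
  have sc: "set_integrable lborel {0..s} (\<lambda>u. B)"
    unfolding set_integrable_def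
    by (intro integrable_scaleR_left integrable_real_indicator) (auto simp: emeasure_lborel_Icc_eq)
  have "\<bar>LINT u:{0..s}|lborel. Lam (T - u) (X (T - u) \<omega>)\<bar>
      \<le> (LINT u:{0..s}|lborel. norm (Lam (T - u) (X (T - u) \<omega>)))"
    using set_integral_norm_bound[OF si] by simp
  also have "\<dots> \<le> (LINT u:{0..s}|lborel. B)"
  proof (rule set_integral_mono)
    show "set_integrable lborel {0..s} (\<lambda>u. norm (Lam (T - u) (X (T - u) \<omega>)))"
      using set_integrable_abs[OF si] by simp
    show "set_integrable lborel {0..s} (\<lambda>u. B)" by (rule sc)
    fix u assume "u \<in> {0..s}"
    then show "norm (Lam (T - u) (X (T - u) \<omega>)) \<le> B" using B assms by auto
  qed
  also have "\<dots> = B * s" using assms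
    by (subst set_integral_const) (auto simp: measure_def emeasure_lborel_Icc_eq)
  finally show ?thesis .
qed

lemma integrable_Y: assumes "0 \<le> s" "s \<le> T" shows "integrable nu (Y s)"
proof -
  obtain B where B: "0 \<le> B" "\<And>v w. 0 \<le> v \<Longrightarrow> v \<le> T \<Longrightarrow> \<bar>Lam v w\<bar> \<le> B" using Lam_bounded by blast
  define C where "C = (\<Sum>w\<in>UNIV. \<bar>Phi (T - s) w\<bar>) + B * s"
  have "AE \<omega> in nu. norm (Y s \<omega>) \<le> C"
  proof (rule AE_I2)
    fix \<omega> assume w: "\<omega> \<in> space nu"
    then have w': "\<omega> \<in> space M" using nu_space by simp
    have "\<bar>Phi (T - s) (X (T - s) \<omega>)\<bar> \<le> (\<Sum>w\<in>UNIV. \<bar>Phi (T - s) w\<bar>)" by (rule member_le_sum) auto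
    moreover have "\<bar>LINT u:{0..s}|lborel. Lam (T - u) (X (T - u) \<omega>)\<bar> \<le> B * s"
      by (rule abs_Lam_path_integral_le[OF assms w' B])
    ultimately show "norm (Y s \<omega>) \<le> C" unfolding Y_def C_def by simp
  qed
  then show ?thesis by (rule nu.integrable_const_bound) (rule measurable_Y_nu[OF assms])
qed

lemma Y_diff_eq: assumes "0 \<le> s" "s \<le> t" "t \<le> T" "\<omega> \<in> space M"
  shows "Y t \<omega> - Y s \<omega> = Phi (T - t) (X (T - t) \<omega>) - Phi (T - s) (X (T - s) \<omega>)
     - (LINT u:{s<..t}|lborel. Lam (T - u) (X (T - u) \<omega>))"
proof -
  have it: "set_integrable lborel {0..t} (\<lambda>u. Lam (T - u) (X (T - u) \<omega>))" using assms
    by (intro set_integrable_Lam_path) auto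
  have "(LINT u:{0..s}\<union>{s<..t}|lborel. Lam (T - u) (X (T - u) \<omega>))
      = (LINT u:{0..s}|lborel. Lam (T - u) (X (T - u) \<omega>)) + (LINT u:{s<..t}|lborel. Lam (T - u) (X (T - u) \<omega>))"
  proof (rule set_integral_Un)
    show "set_integrable lborel {0..s} (\<lambda>u. Lam (T - u) (X (T - u) \<omega>))"
      by (rule set_integrable_subset[OF it]) (use assms in auto)
    show "set_integrable lborel {s<..t} (\<lambda>u. Lam (T - u) (X (T - u) \<omega>))"
      by (rule set_integrable_subset[OF it]) (use assms in auto)
  qed auto
  moreover have "{0..s}\<union>{s<..t} = {0..t}" using assms by auto
  ultimately show ?thesis unfolding Y_def by simp
qed

lemma integral_indicator_Lam_path_integral:
  assumes A: "A \<in> sets M" and st: "0 \<le> s" "s \<le> t" "t \<le> T"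
  shows "(\<integral>\<omega>. indicator A \<omega> * (LINT u:{s<..t}|lborel. Lam (T - u) (X (T - u) \<omega>)) \<partial>nu)
       = (LINT u:{s<..t}|lborel. (\<integral>\<omega>. indicator A \<omega> * Lam (T - u) (X (T - u) \<omega>) \<partial>nu))"
proof -
  interpret p: pair_sigma_finite nu lborel
    by (intro pair_sigma_finite.intro nu.sigma_finite_measure_axioms lborel.sigma_finite_measure_axioms)
  obtain B where B: "0 \<le> B" "\<And>v w. 0 \<le> v \<Longrightarrow> v \<le> T \<Longrightarrow> \<bar>Lam v w\<bar> \<le> B" using Lam_bounded by blast
  define h where "h p = indicator A (fst p)
      * (indicator {s<..t} (snd p) * Lam (T - snd p) (X (T - snd p) (fst p)))" for p
  have A': "A \<in> sets nu" using A sets_nu by simp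
  have heq: "h = (\<lambda>p. (indicator A (fst p) * indicator {s<..t} (snd p)) * (indicator {0..t} (snd p) * Lam (T - snd p) (X (T - snd p) (fst p))))"
    using st by (auto simp: h_def fun_eq_iff indicator_def)
  have i1: "(\<lambda>p. indicator A (fst p) :: real) \<in> borel_measurable (nu \<Otimes>\<^sub>M lborel)"
    by (rule measurable_compose[OF measurable_fst borel_measurable_indicator[OF A']])
  have i2: "(\<lambda>p. indicator {s<..t} (snd p) :: real) \<in> borel_measurable (nu \<Otimes>\<^sub>M lborel)"
    by (rule measurable_compose[OF measurable_snd borel_measurable_indicator]) simp
  have hm: "h \<in> borel_measurable (nu \<Otimes>\<^sub>M lborel)"
    unfolding heq by (intro borel_measurable_times i1 i2 measurable_Lam_path_nu) (use st in auto)
  have hb: "\<And>\<omega> u. \<omega> \<in> space nu \<Longrightarrow> \<bar>h (\<omega>, u)\<bar> \<le> indicator {s<..t} u * B"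
    using B st unfolding h_def by (auto simp: indicator_def abs_mult)
  have hint: "integrable (nu \<Otimes>\<^sub>M lborel) h"
    by (rule nu.integrable_pair_lborel_bounded[OF hm hb st(2)])
  have fu: "(\<integral>u. (\<integral>\<omega>. h (\<omega>, u) \<partial>nu) \<partial>lborel) = (\<integral>\<omega>. (\<integral>u. h (\<omega>, u) \<partial>lborel) \<partial>nu)"
    by (rule p.Fubini_integral) (simp add: hint)
  have l: "(\<integral>u. h (\<omega>, u) \<partial>lborel)
      = indicator A \<omega> * (LINT u:{s<..t}|lborel. Lam (T - u) (X (T - u) \<omega>))" for \<omega>
    unfolding h_def set_lebesgue_integral_def by simp
  have r: "(\<integral>\<omega>. h (\<omega>, u) \<partial>nu)
      = indicator {s<..t} u * (\<integral>\<omega>. indicator A \<omega> * Lam (T - u) (X (T - u) \<omega>) \<partial>nu)" for u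
  proof -
    have "(\<integral>\<omega>. h (\<omega>, u) \<partial>nu) = (\<integral>\<omega>. indicator {s<..t} u * (indicator A \<omega> * Lam (T - u) (X (T - u) \<omega>)) \<partial>nu)"
      unfolding h_def by (simp add: mult_ac)
    then show ?thesis by simp
  qed
  show ?thesis using fu unfolding l r set_lebesgue_integral_def by simp
qed

lemma continuous_on_entropy_dissipation_reversed:
  "t \<le> T \<Longrightarrow> continuous_on {s..t} (\<lambda>u. entropy_dissipation b x (T - u))"
  by (rule continuous_on_compose2[OF continuous_on_entropy_dissipation[of "{0..}"]])
    (auto intro!: continuous_intros)

lemma set_integral_entropy_dissipation:
  assumes st: "s \<le> t" "t \<le> T"
  shows "(LINT u:{s<..t}|lborel. entropy_dissipation b x (T - u))
    = entropy_flow b x (T - t) - entropy_flow b x (T - s)"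
proof -
  have "((\<lambda>u. entropy_flow b x (T - u)) has_vector_derivative entropy_dissipation b x (T - u))
      (at u within {s..t})" if u: "s \<le> u" "u \<le> t" for u
  proof -
    have "((\<lambda>u. T - u) has_real_derivative -1) (at u within {s..t})"
      by (auto intro!: derivative_eq_intros)
    moreover have "0 \<le> T - u" using u st by linarith
    ultimately have "((\<lambda>u. entropy_flow b x (T - u)) has_real_derivative
        (- entropy_dissipation b x (T - u)) * (-1)) (at u within {s..t})"
      by (rule DERIV_chain'[OF _ entropy_flow_deriv])
    then show ?thesis unfolding has_real_derivative_iff_has_vector_derivative by simp
  qed
  then have "(LBINT u=s..t. entropy_dissipation b x (T - u))
      = entropy_flow b x (T - t) - entropy_flow b x (T - s)"
    by (intro interval_integral_FTC_finite)
      (use continuous_on_entropy_dissipation_reversed[OF st(2)] st in \<open>auto simp: min_absorb1 max_absorb2\<close>)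
  moreover have "(LBINT u=s..t. entropy_dissipation b x (T - u))
      = (LBINT u:{s<..t}. entropy_dissipation b x (T - u))"
    by (rule interval_integral_Ioc) (use st in simp)
  ultimately show ?thesis by simp
qed

lemma set_integrable_entropy_dissipation:
  assumes "t \<le> T"
  shows "set_integrable lborel {s<..t} (\<lambda>u. entropy_dissipation b x (T - u))"
proof -
  have "set_integrable lborel {s..t} (\<lambda>u. entropy_dissipation b x (T - u))"
    unfolding set_integrable_def
    by (intro borel_integrable_compact continuous_on_entropy_dissipation_reversed assms) auto
  then show ?thesis by (rule set_integrable_subset) auto
qed

definition past_cyl :: "(real \<times> 's) set \<Rightarrow> 'w set" where
  "past_cyl S = {\<omega>\<in>space M. \<forall>p\<in>S. X (T - fst p) \<omega> = snd p}"

lemma sets_past_cyl: "finite S \<Longrightarrow> past_cyl S \<in> sets M"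
proof -
  assume "finite S"
  have "past_cyl S = {\<omega>\<in>space M. \<forall>p\<in>(\<lambda>p. (T - fst p, snd p)) ` S. X (fst p) \<omega> = snd p}"
    unfolding past_cyl_def by auto
  then show ?thesis using sets_X_cyl \<open>finite S\<close> by simp
qed

lemma integrable_indicator_Phi:
  assumes "A \<in> sets M"
  shows "integrable nu (\<lambda>\<omega>. indicator A \<omega> * Phi v (X v \<omega>))"
proof (rule nu.integrable_const_bound[where B="\<Sum>w\<in>UNIV. \<bar>Phi v w\<bar>"])
  show "AE \<omega> in nu. norm (indicator A \<omega> * Phi v (X v \<omega>)) \<le> (\<Sum>w\<in>UNIV. \<bar>Phi v w\<bar>)"
  proof (rule AE_I2)
    fix \<omega>
    have "\<bar>Phi v (X v \<omega>)\<bar> \<le> (\<Sum>w\<in>UNIV. \<bar>Phi v w\<bar>)" by (rule member_le_sum) auto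
    then show "norm (indicator A \<omega> * Phi v (X v \<omega>)) \<le> (\<Sum>w\<in>UNIV. \<bar>Phi v w\<bar>)"
      by (auto simp: indicator_def abs_mult)
  qed
  have "X v \<in> measurable nu (count_space UNIV)"
    using X_measurable by (simp add: measurable_cong_sets[OF sets_nu refl])
  then show "(\<lambda>\<omega>. indicator A \<omega> * Phi v (X v \<omega>)) \<in> borel_measurable nu"
    using assms sets_nu by (intro borel_measurable_times borel_measurable_indicator) auto
qed

lemma integral_indicator_Y_diff:
  assumes A: "A \<in> sets M" and st: "0 \<le> s" "s \<le> t" "t \<le> T"
  shows "(\<integral>\<omega>. indicator A \<omega> * (Y t \<omega> - Y s \<omega>) \<partial>nu)
    = (\<integral>\<omega>. indicator A \<omega> * Phi (T - t) (X (T - t) \<omega>) \<partial>nu)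
      - (\<integral>\<omega>. indicator A \<omega> * Phi (T - s) (X (T - s) \<omega>) \<partial>nu)
      - (LINT u:{s<..t}|lborel. (\<integral>\<omega>. indicator A \<omega> * Lam (T - u) (X (T - u) \<omega>) \<partial>nu))"
proof -
  let ?I = "\<lambda>\<omega>. indicator A \<omega> :: real"
  let ?L = "\<lambda>\<omega>. LINT u:{s<..t}|lborel. Lam (T - u) (X (T - u) \<omega>)"
  let ?Pt = "\<lambda>\<omega>. ?I \<omega> * Phi (T - t) (X (T - t) \<omega>)" and ?Ps = "\<lambda>\<omega>. ?I \<omega> * Phi (T - s) (X (T - s) \<omega>)"
  have pointwise: "?I \<omega> * (Y t \<omega> - Y s \<omega>) = ?Pt \<omega> - ?Ps \<omega> - ?I \<omega> * ?L \<omega>" if "\<omega> \<in> space nu" for \<omega>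
    using Y_diff_eq[OF st, of \<omega>] that nu_space by (simp add: right_diff_distrib)
  have "integrable nu (\<lambda>\<omega>. indicator A \<omega> *\<^sub>R (Y t \<omega> - Y s \<omega>))"
    using A st sets_nu by (intro integrable_mult_indicator Bochner_Integration.integrable_diff integrable_Y) auto
  then have "integrable nu (\<lambda>\<omega>. ?Pt \<omega> - ?Ps \<omega> - ?I \<omega> * (Y t \<omega> - Y s \<omega>))"
    using integrable_indicator_Phi[OF A] by auto
  also have "?this \<longleftrightarrow> integrable nu (\<lambda>\<omega>. ?I \<omega> * ?L \<omega>)"
    by (rule Bochner_Integration.integrable_cong[OF refl]) (simp add: pointwise)
  finally have "integrable nu (\<lambda>\<omega>. ?I \<omega> * ?L \<omega>)" .
  then have "(\<integral>\<omega>. ?I \<omega> * (Y t \<omega> - Y s \<omega>) \<partial>nu)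
      = (\<integral>\<omega>. ?Pt \<omega> \<partial>nu) - (\<integral>\<omega>. ?Ps \<omega> \<partial>nu) - (\<integral>\<omega>. ?I \<omega> * ?L \<omega> \<partial>nu)"
    using integrable_indicator_Phi[OF A]
      by (simp add: Bochner_Integration.integral_cong[OF refl pointwise])
  then show ?thesis unfolding integral_indicator_Lam_path_integral[OF A st] .
qed

text \<open>The Markov property at time \<open>b = T - s\<close>: below \<open>b\<close>, expectations over a cylinder
  event of the past of the reversed chain only see the marginal law and the transitions into
  \<open>X(b)\<close>.\<close>
lemma integral_past_cyl_factor:
  assumes S: "finite S" "S \<subseteq> {0..s} \<times> UNIV"
  obtains c where "\<And>v F. 0 \<le> v \<Longrightarrow> v \<le> T - s \<Longrightarrow>
    (\<integral>\<omega>. indicator (past_cyl S) \<omega> * F (X v \<omega>) \<partial>nu)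
      = (\<Sum>x\<in>UNIV. c x * (\<Sum>z\<in>UNIV. marginal v z * F z * trans_fun P (T - s - v) z x))"
proof -
  define S' where "S' = (\<lambda>p. (T - fst p, snd p)) ` S"
  have past_cyl_eq: "past_cyl S = {\<omega>\<in>space M. \<forall>p\<in>S'. X (fst p) \<omega> = snd p}"
    unfolding past_cyl_def S'_def by auto
  have S': "finite S'" "\<forall>p\<in>S'. T - s \<le> fst p"
    unfolding S'_def using S by auto
  obtain c where c: "\<And>v z x. 0 \<le> v \<Longrightarrow> v \<le> T - s \<Longrightarrow>
     measure nu {\<omega>\<in>space M. X v \<omega> = z \<and> X (T - s) \<omega> = x \<and> (\<forall>p\<in>S'. X (fst p) \<omega> = snd p)}
       = marginal v z * trans_fun P (T - s - v) z x * c x"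
    using measure_X_cyl_factor[OF S'] by blast
  show ?thesis
  proof (rule that[of c])
    fix v F assume v: "0 \<le> v" "v \<le> T - s"
    show "(\<integral>\<omega>. indicator (past_cyl S) \<omega> * F (X v \<omega>) \<partial>nu)
      = (\<Sum>x\<in>UNIV. c x * (\<Sum>z\<in>UNIV. marginal v z * F z * trans_fun P (T - s - v) z x))"
      unfolding past_cyl_eq by (rule integral_X_cyl_factor[OF S' c v])
  qed
qed

lemma integral_past_cyl_Y_diff:
  assumes S: "finite S" "S \<subseteq> {0..s} \<times> UNIV" and st: "0 \<le> s" "s \<le> t" "t \<le> T"
  shows "(\<integral>\<omega>. indicator (past_cyl S) \<omega> * (Y t \<omega> - Y s \<omega>) \<partial>nu) = 0"
proof -
  obtain c where c: "\<And>v F. 0 \<le> v \<Longrightarrow> v \<le> T - s \<Longrightarrow>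
    (\<integral>\<omega>. indicator (past_cyl S) \<omega> * F (X v \<omega>) \<partial>nu)
      = (\<Sum>x\<in>UNIV. c x * (\<Sum>z\<in>UNIV. marginal v z * F z * trans_fun P (T - s - v) z x))"
    using integral_past_cyl_factor[OF S] by blast
  have Phi: "(\<integral>\<omega>. indicator (past_cyl S) \<omega> * Phi v (X v \<omega>) \<partial>nu)
      = (\<Sum>x\<in>UNIV. c x * entropy_flow (T - s) x v)" if "0 \<le> v" "v \<le> T - s" for v
    unfolding c[OF that] entropy_flow_def using that st by (simp add: marginal_Phi)
  have Lam: "(\<integral>\<omega>. indicator (past_cyl S) \<omega> * Lam (T - u) (X (T - u) \<omega>) \<partial>nu)
      = (\<Sum>x\<in>UNIV. c x * entropy_dissipation (T - s) x (T - u))" if "u \<in> {s<..t}" for u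
  proof -
    have "(\<integral>\<omega>. indicator (past_cyl S) \<omega> * Lam (T - u) (X (T - u) \<omega>) \<partial>nu)
      = (\<Sum>x\<in>UNIV. c x * (\<Sum>z\<in>UNIV. marginal (T - u) z * Lam (T - u) z * trans_fun P (T - s - (T - u)) z x))"
      using that st by (intro c) auto
    then show ?thesis unfolding entropy_dissipation_def using that st by (simp add: marginal_Lam)
  qed
  have "(LINT u:{s<..t}|lborel. (\<integral>\<omega>. indicator (past_cyl S) \<omega> * Lam (T - u) (X (T - u) \<omega>) \<partial>nu))
      = (LINT u:{s<..t}|lborel. (\<Sum>x\<in>UNIV. c x * entropy_dissipation (T - s) x (T - u)))"
    by (intro set_lebesgue_integral_cong) (auto simp: Lam)
  also have "\<dots> = (\<Sum>x\<in>UNIV. c x * (entropy_flow (T - s) x (T - t) - entropy_flow (T - s) x (T - s)))"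
    using st by (simp add: set_integral_sum_mult set_integrable_entropy_dissipation set_integral_entropy_dissipation)
  moreover have "(\<integral>\<omega>. indicator (past_cyl S) \<omega> * Phi (T - t) (X (T - t) \<omega>) \<partial>nu)
      = (\<Sum>x\<in>UNIV. c x * entropy_flow (T - s) x (T - t))"
    by (rule Phi) (use st in auto)
  moreover have "(\<integral>\<omega>. indicator (past_cyl S) \<omega> * Phi (T - s) (X (T - s) \<omega>) \<partial>nu)
      = (\<Sum>x\<in>UNIV. c x * entropy_flow (T - s) x (T - s))"
    by (rule Phi) (use st in auto)
  ultimately show ?thesis
    unfolding integral_indicator_Y_diff[OF sets_past_cyl[OF S(1)] st]
    by (simp add: sum_subtractf right_diff_distrib)
qed

lemma set_integral_Y_eq:
  assumes st: "0 \<le> s" "s \<le> t" "t \<le> T" and A: "A \<in> sets (G s)"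
  shows "(LINT \<omega>:A|nu. Y t \<omega>) = (LINT \<omega>:A|nu. Y s \<omega>)"
proof -
  define E where "E = {past_cyl S | S. finite S \<and> S \<subseteq> {0..s} \<times> UNIV}"
  have "E \<subseteq> sets nu" unfolding E_def using sets_past_cyl sets_nu by auto
  moreover have "Int_stable E"
  proof (rule Int_stableI)
    fix a b assume "a \<in> E" "b \<in> E"
    moreover have "past_cyl S1 \<inter> past_cyl S2 = past_cyl (S1 \<union> S2)" for S1 S2
      unfolding past_cyl_def by auto
    ultimately show "a \<inter> b \<in> E" unfolding E_def by blast
  qed
  moreover have "past_gens s \<subseteq> E"
  proof
    fix e assume "e \<in> past_gens s"
    then obtain u y where "e = {\<omega>\<in>space M. X (T - u) \<omega> = y}" "0 \<le> u" "u \<le> s"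
      unfolding past_gens_def by auto
    then show "e \<in> E" unfolding E_def past_cyl_def by (intro CollectI exI[of _ "{(u, y)}"]) auto
  qed
  then have "A \<in> sigma_sets (space nu) E"
    using A unfolding sets_G nu_space by (rule subsetD[OF sigma_sets_subseteq])
  moreover have "space nu \<in> E"
    unfolding E_def past_cyl_def nu_space by (intro CollectI exI[of _ "{}"]) auto
  moreover have "integrable nu (\<lambda>\<omega>. Y t \<omega> - Y s \<omega>)"
    using st by (intro Bochner_Integration.integrable_diff integrable_Y) auto
  ultimately have "(\<integral>\<omega>. indicator A \<omega> * (Y t \<omega> - Y s \<omega>) \<partial>nu) = 0"
    by (rule integral_indicator_eq_0_sigma_sets)
      (auto simp: E_def intro: integral_past_cyl_Y_diff[OF _ _ st])
  moreover have "A \<in> sets nu" using A sets_G_subset sets_nu by auto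
  then have "integrable nu (\<lambda>\<omega>. indicator A \<omega> *\<^sub>R Y r \<omega>)" if "r \<in> {s, t}" for r
    using that st by (intro integrable_mult_indicator integrable_Y) auto
  then have "set_integrable nu A (Y t)" "set_integrable nu A (Y s)"
    unfolding set_integrable_def by auto
  ultimately show ?thesis
    using set_integral_diff(2) unfolding set_lebesgue_integral_def by fastforce
qed

lemma martingale_Y: "martingale_on nu G {0..T} Y"
  unfolding martingale_on_def
proof (intro conjI ballI impI)
  fix s assume s: "s \<in> {0..T}"
  show "subalgebra nu (G s)" by (rule subalgebra_G)
  show "Y s \<in> borel_measurable (G s)" using s by (intro measurable_Y_G) auto
  show "integrable nu (Y s)" using s by (intro integrable_Y) auto
  fix t assume t: "t \<in> {0..T}"
  show "sets (G s) \<subseteq> sets (G t)" if "s \<le> t" using that by (rule sets_G_mono)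
  assume st: "s \<le> t"
  have "sigma_finite_subalgebra nu (G s)"
    by (intro finite_measure_subalgebra_is_sigma_finite finite_measure_subalgebra.intro
        nu.finite_measure_axioms finite_measure_subalgebra_axioms.intro subalgebra_G)
  then show "AE \<omega> in nu. real_cond_exp nu (G s) (Y t) \<omega> = Y s \<omega>"
    by (rule sigma_finite_subalgebra.real_cond_exp_charact)
      (use s t st in \<open>auto intro: set_integral_Y_eq integrable_Y measurable_Y_G\<close>)
qed

end

section \<open>The stationary measure and the two martingales\<close>

context ctmc
begin

definition stationary_measure :: "'w measure" where
  "stationary_measure = density M (\<lambda>\<omega>. ennreal (q (Z 0 \<omega>) / mu (Z 0 \<omega>)))"

lemma sets_stationary_measure: "sets stationary_measure = sets M"
  unfolding stationary_measure_def by simp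

lemma emeasure_stationary_measure_cyl:
  "emeasure stationary_measure (cyl m tx) = ennreal (q m / mu m * prob (cyl m tx))"
proof -
  have "(\<lambda>\<omega>. ennreal (q (Z 0 \<omega>) / mu (Z 0 \<omega>))) \<in> borel_measurable M"
    by (rule measurable_compose[OF Z_measurable]) simp
  then have "emeasure stationary_measure (cyl m tx)
      = (\<integral>\<^sup>+\<omega>. ennreal (q (Z 0 \<omega>) / mu (Z 0 \<omega>)) * indicator (cyl m tx) \<omega> \<partial>M)"
    unfolding stationary_measure_def by (rule emeasure_density) simp
  also have "\<dots> = (\<integral>\<^sup>+\<omega>. ennreal (q m / mu m) * indicator (cyl m tx) \<omega> \<partial>M)"
    by (intro nn_integral_cong) (auto simp: indicator_def cyl_def)
  also have "\<dots> = ennreal (q m / mu m) * ennreal (prob (cyl m tx))"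
    by (simp add: nn_integral_cmult_indicator emeasure_eq_measure)
  also have "\<dots> = ennreal (q m / mu m * prob (cyl m tx))"
    by (rule ennreal_mult[symmetric]) (use q_pos[of m] mu_pos[of m] in auto)
  finally show ?thesis .
qed

lemma prob_space_stationary_measure: "prob_space stationary_measure"
proof (rule prob_spaceI)
  have "space stationary_measure = (\<Union>m\<in>UNIV. cyl m [])"
    unfolding stationary_measure_def cyl_def by auto
  moreover have "emeasure stationary_measure (\<Union>m\<in>UNIV. cyl m [])
      = (\<Sum>m\<in>UNIV. emeasure stationary_measure (cyl m []))"
    by (rule sum_emeasure[symmetric]) (auto simp: sets_stationary_measure disjoint_family_on_def cyl_def)
  moreover have "emeasure stationary_measure (cyl m []) = ennreal (q m)" for m
    using prob_cyl[of "[]" m] mu_pos[of m] unfolding emeasure_stationary_measure_cyl by simp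
  moreover have "(\<Sum>m\<in>UNIV. ennreal (q m)) = ennreal (\<Sum>m\<in>UNIV. q m)"
    using q_pos by (intro sum_ennreal) (simp add: less_imp_le)
  ultimately show "emeasure stationary_measure (space stationary_measure) = 1"
    using invariant unfolding invariant_distribution_def by simp
qed

lemma ctmc_law_stationary_measure: "ctmc_law M P q mu Z N stationary_measure q"
proof (intro ctmc_law.intro ctmc_law_axioms.intro)
  show "ctmc M P q mu Z N" by (rule ctmc_axioms)
  show "prob_space stationary_measure" by (rule prob_space_stationary_measure)
  show "sets stationary_measure = sets M" by (rule sets_stationary_measure)
  fix m and tx :: "(real \<times> 's) list"
  assume "sorted (0 # map fst tx)"
  moreover have "0 \<le> q m / mu m * prob (cyl m tx)" using q_pos[of m] mu_pos[of m] by simp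
  ultimately show "measure stationary_measure (cyl m tx) = q m * trans_prod (trans_fun P) 0 m tx"
    using prob_cyl mu_pos[of m] unfolding measure_def emeasure_stationary_measure_cyl by simp
qed

lemma ctmc_law_M: "ctmc_law M P q mu Z N M mu"
  by (intro ctmc_law.intro ctmc_law_axioms.intro ctmc_axioms prob_space_axioms refl prob_cyl)

lemma LambdaP_ell: "0 \<le> v \<Longrightarrow> LambdaP P q (ell M X q) v w = LambdaP P q rel_density v w"
  unfolding LambdaP_def using ell_eq_rel_density by simp

lemma LambdaQ_ell: "0 \<le> v \<Longrightarrow> LambdaQ P q (ell M X q) v w = LambdaQ P q rel_density v w"
  unfolding LambdaQ_def using ell_eq_rel_density LambdaP_ell by simp

lemma martingale_stationary_measure:
  "martingale_on stationary_measure (nat_filtration M (\<lambda>s. X (T - s))) {0..T}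
     (\<lambda>s \<omega>. ell M X q (T - s) (X (T - s) \<omega>) * ln (ell M X q (T - s) (X (T - s) \<omega>))
        - (LINT u:{0..s}|lborel. LambdaQ P q (ell M X q) (T - u) (X (T - u) \<omega>)))"
proof -
  interpret law: ctmc_law M P q mu Z N stationary_measure q
    by (rule ctmc_law_stationary_measure)
  have marginal: "law.marginal v w = q w" if "0 \<le> v" for v w
    using trans_fun_invariant[OF invariant that] unfolding law.marginal_eq[OF that] by simp
  interpret reversed_martingale M P q mu Z N stationary_measure q T
    "\<lambda>v w. ell M X q v w * ln (ell M X q v w)" "LambdaQ P q (ell M X q)"
  proof
    show "continuous_on {0..T} (\<lambda>v. LambdaQ P q (ell M X q) v w)" for w
      using continuous_on_LambdaQ[of "{0..T}" w]
        by (rule continuous_on_cong[THEN iffD1, rotated 2]) (auto simp: LambdaQ_ell)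
  qed (simp_all add: marginal entropy_density_def ell_eq_rel_density LambdaQ_ell)
  show ?thesis using martingale_Y unfolding G_def[abs_def] Y_def[abs_def] .
qed

lemma martingale_M:
  "martingale_on M (nat_filtration M (\<lambda>s. X (T - s))) {0..T}
     (\<lambda>s \<omega>. ln (ell M X q (T - s) (X (T - s) \<omega>))
        - (LINT u:{0..s}|lborel. LambdaP P q (ell M X q) (T - u) (X (T - u) \<omega>)))"
proof -
  interpret law: ctmc_law M P q mu Z N M mu
    by (rule ctmc_law_M)
  have marginal: "law.marginal v w = q w * rel_density v w" if "0 \<le> v" for v w
    unfolding law.marginal_eq[OF that] q_mult_rel_density ..
  interpret reversed_martingale M P q mu Z N M mu T
    "\<lambda>v w. ln (ell M X q v w)" "LambdaP P q (ell M X q)"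
  proof
    show "continuous_on {0..T} (\<lambda>v. LambdaP P q (ell M X q) v w)" for w
      using continuous_on_LambdaP[of "{0..T}" w]
        by (rule continuous_on_cong[THEN iffD1, rotated 2]) (auto simp: LambdaP_ell)
  qed (simp_all add: marginal entropy_density_def ell_eq_rel_density LambdaP_ell LambdaQ_def)
  show ?thesis using martingale_Y unfolding G_def[abs_def] Y_def[abs_def] .
qed

end

theorem proposition7p2:
  fixes M :: "'w measure"
    and P :: "'s::finite \<Rightarrow> 's \<Rightarrow> real"
    and q mu :: "'s \<Rightarrow> real"
    and Z :: "nat \<Rightarrow> 'w \<Rightarrow> 's"
    and N :: "real \<Rightarrow> 'w \<Rightarrow> nat"
    and T :: real
  assumes "prob_space M"
    and "stochastic P" and "irreducible_chain P"
    and "invariant_distribution P q"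
    and "\<forall>x. mu x > 0" and "(\<Sum>x\<in>UNIV. mu x) = 1"
    and "markov_chain M Z P mu"
    and "poisson_process1 M N"
    and "independent_processes M Z N"
    and "0 < T"
  defines "l \<equiv> ell M (ctchain Z N) q"
    and "Q \<equiv> density M (\<lambda>\<omega>. ennreal (q (Z 0 \<omega>) / mu (Z 0 \<omega>)))"
    and "Xh \<equiv> (\<lambda>s. ctchain Z N (T - s))"
    and "G \<equiv> nat_filtration M (\<lambda>s. ctchain Z N (T - s))"
  shows "martingale_on Q G {0..T}
           (\<lambda>s \<omega>. l (T - s) (Xh s \<omega>) * ln (l (T - s) (Xh s \<omega>))
              - (LINT u:{0..s}|lborel. LambdaQ P q l (T - u) (Xh u \<omega>)))
         \<and> martingale_on M G {0..T}
           (\<lambda>s \<omega>. ln (l (T - s) (Xh s \<omega>))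
              - (LINT u:{0..s}|lborel. LambdaP P q l (T - u) (Xh u \<omega>)))"
proof -
  interpret ctmc M P q mu Z N
    using assms(1-5,7-9) by (intro ctmc.intro stochastic_matrix.intro ctmc_axioms.intro) auto
  show ?thesis
    using martingale_stationary_measure[of T] martingale_M[of T]
    unfolding l_def Q_def Xh_def G_def stationary_measure_def by simp
qed

end
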